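(* Let $\bar\mu_0\ge0$. For all $x,y\in\Omega$, $$G_k(\Omega)(x,y)=\sum_{w\in\mathrm{Img}(y)}G_k(x,w),$$ the series being absolutely convergent.
   Context: Setup: $d\ge1$, odd integer $L>1$, integers $k\ge1$, $m\ge k$, $\eta=L^{-k}$, $\Omega=\eta\{0,\dots,L^m-1\}^d$, $\Omega_k=\{0,\dots,L^{m-k}-1\}^d$. $\mathcal L^2(\Omega)$, $\mathcal L^2(\eta\mathbb Z^d)$ have inner products $\eta^d\sum\bar fg$. For $y\in\mathbb Z^d$, $B_k(y)=\{x\in\eta\mathbb Z^d: y_\mu\le x_\mu<y_\mu+1\ \forall\mu\}$. Averaging operators $(Q_{\Omega,k}f)(y)=\sum_{x\in B_k(y)}L^{-kd}f(x)$ for $y\in\Omega_k$ and $(Q_kf)(y)$ given by the same formula for $y\in\mathbb Z^d$, $f\in\mathcal L^2(\eta\mathbb Z^d)$; adjoints $(Q^*h)(x)=h(y_x)$ with $x\in B_k(y_x)$. Neumann Laplacian $(\Delta^\eta_\Omega f)(x)=\eta^{-2}\sum_\mu(f(x+\eta e_\mu)-2f(x)+f(x-\eta e_\mu))$, with $f(x\pm\eta e_\mu):=f(x)$ if $x\pm\eta e_\mu\notin\Omega$; free Laplacian $\Delta^\eta$ on $\eta\mathbb Z^d$ given by the same formula without replacement. Fix $a\in(0,1]$, $a_k=a\frac{1-L^{-2}}{1-L^{-2k}}$, $\bar\mu_k=L^{2k}\bar\mu_0$, $G_k(\Omega)=(-\Delta^\eta_\Omega+\bar\mu_k+a_kQ^*_{\Omega,k}Q_{\Omega,k})^{-1}$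 and $G_k=(-\Delta^\eta+\bar\mu_k+a_kQ_k^*Q_k)^{-1}$ (bounded on $\mathcal L^2(\eta\mathbb Z^d)$). Kernels: $G_k(\Omega)(x,y)=\langle\delta^\eta_x,G_k(\Omega)\delta^\eta_y\rangle$ and $G_k(x,y)=\langle\delta^\eta_x,G_k\delta^\eta_y\rangle$ with $\delta^\eta_x=\eta^{-d}\mathbb 1_{\{x\}}$. For $\mu=0,\dots,d-1$ let $P_\mu$ and $\bar P_\mu$ be the reflections of $\eta\mathbb Z^d$ changing only the $\mu$-th coordinate: $(P_\mu x)_\mu=-\eta-x_\mu$ and $(\bar P_\mu x)_\mu=(2L^m-1)\eta-x_\mu$ (reflections across the hyperplanes $x_\mu=-\eta/2$ and $x_\mu=(L^m-\tfrac12)\eta$). $\mathrm{Img}(y)$ is the orbit of $y$ under the group generated by all $P_\mu,\bar P_\mu$. *)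

theory Defs
  imports "HOL-Analysis.Analysis"
begin

text \<open>Lattice points of eta Z^d are represented by integer coordinate vectors
  n :: int^'d, standing for the point eta * n, with eta = L^(-k).
  The dimension d is CARD('d).\<close>

definition eta :: "nat \<Rightarrow> nat \<Rightarrow> real" where
  "eta L k = 1 / real L ^ k"

definition delta_pt :: "nat \<Rightarrow> nat \<Rightarrow> ('d::finite) itself \<Rightarrow> int^'d \<Rightarrow> int^'d \<Rightarrow> real" where
  "delta_pt L k TYPE_d y z = (if z = y then (1 / eta L k) ^ CARD('d) else 0)"

definition inOmega :: "nat \<Rightarrow> nat \<Rightarrow> int^'d \<Rightarrow> bool" where
  "inOmega L m n \<longleftrightarrow> (\<forall>i. 0 \<le> n$i \<and> n$i < int L ^ m)"

text \<open>Omega_k = {0,...,L^(m-k)-1}^d (unit lattice)\<close>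
definition inOmegak :: "nat \<Rightarrow> nat \<Rightarrow> nat \<Rightarrow> int^'d \<Rightarrow> bool" where
  "inOmegak L m k y \<longleftrightarrow> (\<forall>i. 0 \<le> y$i \<and> y$i < int L ^ (m - k))"

definition sh :: "int^'d \<Rightarrow> 'd \<Rightarrow> int \<Rightarrow> int^'d" where
  "sh n \<mu> s = (\<chi> i. if i = \<mu> then n$i + s else n$i)"

text \<open>Block B_k(y) for y in Z^d: the points eta*n with y_mu <= eta*n_mu < y_mu + 1\<close>
definition Blk :: "nat \<Rightarrow> nat \<Rightarrow> int^'d \<Rightarrow> (int^'d) set" where
  "Blk L k y = {n. \<forall>i. int L ^ k * y$i \<le> n$i \<and> n$i < int L ^ k * y$i + int L ^ k}"

definition blkof :: "nat \<Rightarrow> nat \<Rightarrow> int^'d \<Rightarrow> int^'d" where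
  "blkof L k n = (\<chi> i. n$i div (int L ^ k))"

definition Qk :: "nat \<Rightarrow> nat \<Rightarrow> (int^'d::finite \<Rightarrow> real) \<Rightarrow> int^'d \<Rightarrow> real" where
  "Qk L k f y = (\<Sum>x\<in>Blk L k y. (1 / real L ^ k) ^ CARD('d) * f x)"

definition Qk_adj :: "nat \<Rightarrow> nat \<Rightarrow> (int^'d \<Rightarrow> real) \<Rightarrow> int^'d \<Rightarrow> real" where
  "Qk_adj L k h x = h (blkof L k x)"

definition QOmk :: "nat \<Rightarrow> nat \<Rightarrow> nat \<Rightarrow> (int^'d::finite \<Rightarrow> real) \<Rightarrow> int^'d \<Rightarrow> real" where
  "QOmk L m k f y = (if inOmegak L m k y
      then (\<Sum>x\<in>Blk L k y. (1 / real L ^ k) ^ CARD('d) * f x) else 0)"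

definition QOmk_adj :: "nat \<Rightarrow> nat \<Rightarrow> (int^'d \<Rightarrow> real) \<Rightarrow> int^'d \<Rightarrow> real" where
  "QOmk_adj L k h x = h (blkof L k x)"

definition lap :: "nat \<Rightarrow> nat \<Rightarrow> (int^'d::finite \<Rightarrow> real) \<Rightarrow> int^'d \<Rightarrow> real" where
  "lap L k f x = (eta L k) powi (-2) *
     (\<Sum>\<mu>\<in>UNIV. f (sh x \<mu> 1) - 2 * f x + f (sh x \<mu> (-1)))"

definition lapN :: "nat \<Rightarrow> nat \<Rightarrow> nat \<Rightarrow> (int^'d::finite \<Rightarrow> real) \<Rightarrow> int^'d \<Rightarrow> real" where
  "lapN L m k f x = (eta L k) powi (-2) *
     (\<Sum>\<mu>\<in>UNIV. (if inOmega L m (sh x \<mu> 1) then f (sh x \<mu> 1) else f x) - 2 * f x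
               + (if inOmega L m (sh x \<mu> (-1)) then f (sh x \<mu> (-1)) else f x))"

definition a_k :: "nat \<Rightarrow> nat \<Rightarrow> real \<Rightarrow> real" where
  "a_k L k a = a * (1 - real L powi (-2)) / (1 - real L powi (- 2 * int k))"

definition mubar_k :: "nat \<Rightarrow> nat \<Rightarrow> real \<Rightarrow> real" where
  "mubar_k L k mubar0 = real L ^ (2 * k) * mubar0"

definition Afree :: "nat \<Rightarrow> nat \<Rightarrow> real \<Rightarrow> real \<Rightarrow> (int^'d::finite \<Rightarrow> real) \<Rightarrow> int^'d \<Rightarrow> real" where
  "Afree L k a mubar0 g x = - lap L k g x + mubar_k L k mubar0 * g x
      + a_k L k a * Qk_adj L k (Qk L k g) x"

definition AOm :: "nat \<Rightarrow> nat \<Rightarrow> nat \<Rightarrow> real \<Rightarrow> real \<Rightarrow> (int^'d::finite \<Rightarrow> real) \<Rightarrow> int^'d \<Rightarrow> real" where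
  "AOm L m k a mubar0 g x = - lapN L m k g x + mubar_k L k mubar0 * g x
      + a_k L k a * QOmk_adj L k (QOmk L m k g) x"

text \<open>Kernel G_k(x,w) = <delta_x, G_k delta_w> = (G_k delta_w)(x), where G_k delta_w is the
  unique L^2(eta Z^d) solution g of (-Delta + mubar_k + a_k Q_k^* Q_k) g = delta_w.\<close>
definition Gfree :: "nat \<Rightarrow> nat \<Rightarrow> real \<Rightarrow> real \<Rightarrow> int^'d::finite \<Rightarrow> int^'d \<Rightarrow> real" where
  "Gfree L k a mubar0 x w =
     (THE g. (\<lambda>z. (g z)\<^sup>2) summable_on UNIV \<and>
             (\<forall>z. Afree L k a mubar0 g z = delta_pt L k TYPE('d) w z)) x"

text \<open>Kernel G_k(Omega)(x,y) = (G_k(Omega) delta_y)(x), where G_k(Omega) delta_y is the unique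
  function g on Omega (extended by 0 outside Omega) with
  (-Delta_Omega + mubar_k + a_k Q_{Omega,k}^* Q_{Omega,k}) g = delta_y on Omega.\<close>
definition GOm :: "nat \<Rightarrow> nat \<Rightarrow> nat \<Rightarrow> real \<Rightarrow> real \<Rightarrow> int^'d::finite \<Rightarrow> int^'d \<Rightarrow> real" where
  "GOm L m k a mubar0 x y =
     (THE g. (\<forall>z. \<not> inOmega L m z \<longrightarrow> g z = 0) \<and>
             (\<forall>z. inOmega L m z \<longrightarrow> AOm L m k a mubar0 g z = delta_pt L k TYPE('d) y z)) x"

text \<open>Reflections P_mu (across x_mu = -eta/2) and Pbar_mu (across x_mu = (L^m - 1/2) eta)\<close>
definition Pref :: "'d \<Rightarrow> int^'d \<Rightarrow> int^'d" where
  "Pref \<mu> n = (\<chi> i. if i = \<mu> then - 1 - n$i else n$i)"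

definition Pbar :: "nat \<Rightarrow> nat \<Rightarrow> 'd \<Rightarrow> int^'d \<Rightarrow> int^'d" where
  "Pbar L m \<mu> n = (\<chi> i. if i = \<mu> then 2 * int L ^ m - 1 - n$i else n$i)"

text \<open>Orbit of y under the group generated by all P_mu, Pbar_mu (they are involutions,
  so closure under applying generators gives the group orbit).\<close>
inductive_set Img :: "nat \<Rightarrow> nat \<Rightarrow> int^'d \<Rightarrow> (int^'d) set" for L m y where
  base: "y \<in> Img L m y"
| refl1: "w \<in> Img L m y \<Longrightarrow> Pref \<mu> w \<in> Img L m y"
| refl2: "w \<in> Img L m y \<Longrightarrow> Pbar L m \<mu> w \<in> Img L m y"

end

theory Submission
  imports Defs
begin

text \<open>
  The free operator \<open>-\<Delta> + \<mu>\<^sub>k + a\<^sub>k Q\<^sup>*Q\<close> is given by a symmetric, bounded kernel of finite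
  range on \<open>\<eta>\<int>\<^sup>d\<close>, and it is coercive even without mass: \<open>a\<^sub>k\<close> controls the block averages
  and a Poincare inequality on each block controls the rest by the Dirichlet form. A
  Richardson iteration, which is a contraction in \<open>\<ell>\<^sup>2\<close>, therefore produces its Green function
  \<open>G\<^sub>k\<close> as a Neumann series with exponential decay, and \<open>G\<^sub>k(\<cdot>, w)\<close> is the only \<open>\<ell>\<^sup>2\<close>
  solution with source \<open>\<delta>\<^sub>w\<close>.

  The reflections \<open>Pref \<mu>\<close> and \<open>Pbar L m \<mu>\<close> map blocks onto blocks, so they commute with the operator
  and uniqueness gives \<open>G\<^sub>k(R x, w) = G\<^sub>k(x, R w)\<close>. Hence the image sum
  \<open>F(x) = \<Sum>\<^bsub>w \<in> Img(y)\<^esub> G\<^sub>k(x, w)\<close>, absolutely convergent by the decay, is invariant under all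
  reflections. For such functions the Neumann Laplacian on \<open>\<Omega>\<close> agrees with the free one,
  and \<open>y\<close> is the only image of \<open>y\<close> in \<open>\<Omega>\<close>, so \<open>F\<close> solves the Neumann problem with source
  \<open>\<delta>\<^sub>y\<close>. That solution is unique, because the Neumann operator is symmetric and can be solved
  for every point source.
\<close>

section \<open>Sums of finitely supported functions\<close>

definition supp :: "('a \<Rightarrow> real) \<Rightarrow> 'a set" where
  "supp u = {x. u x \<noteq> 0}"

definition fsum :: "('a \<Rightarrow> real) \<Rightarrow> real" where
  "fsum u = sum u (supp u)"

lemma fsum_eq_sum: assumes "finite F" "\<And>x. u x \<noteq> 0 \<Longrightarrow> x \<in> F" shows "fsum u = sum u F"
  unfolding fsum_def using assms by (intro sum.mono_neutral_left) (auto simp: supp_def)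

lemma finite_suppI: assumes "finite F" "\<And>x. u x \<noteq> 0 \<Longrightarrow> x \<in> F" shows "finite (supp u)"
  using assms by (metis (mono_tags, lifting) finite_subset mem_Collect_eq subsetI supp_def)

lemma finite_supp_add:
  "finite (supp f) \<Longrightarrow> finite (supp g) \<Longrightarrow> finite (supp (\<lambda>x. f x + g x))"
  by (rule finite_suppI[of "supp f \<union> supp g"]) (auto simp: supp_def)

lemma finite_supp_diff:
  "finite (supp f) \<Longrightarrow> finite (supp g) \<Longrightarrow> finite (supp (\<lambda>x. f x - g x))"
  by (rule finite_suppI[of "supp f \<union> supp g"]) (auto simp: supp_def)

lemma finite_supp_mult_left: "finite (supp f) \<Longrightarrow> finite (supp (\<lambda>x. f x * g x))"
  by (rule finite_suppI[of "supp f"]) (auto simp: supp_def)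

lemma finite_supp_mult_right: "finite (supp g) \<Longrightarrow> finite (supp (\<lambda>x. f x * g x))"
  by (rule finite_suppI[of "supp g"]) (auto simp: supp_def)

lemma finite_supp_power2: "finite (supp f) \<Longrightarrow> finite (supp (\<lambda>x. (f x)\<^sup>2))"
  by (rule finite_suppI[of "supp f"]) (auto simp: supp_def)

lemma finite_supp_sum:
  "finite I \<Longrightarrow> (\<And>i. i \<in> I \<Longrightarrow> finite (supp (f i))) \<Longrightarrow> finite (supp (\<lambda>x. \<Sum>i\<in>I. f i x))"
  by (rule finite_suppI[of "\<Union>i\<in>I. supp (f i)"])
     (auto simp: supp_def dest: sum.not_neutral_contains_not_neutral)

lemma finite_supp_compose_bij:
  assumes "bij p" "finite (supp f)" shows "finite (supp (\<lambda>x. f (p x)))"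
proof -
  have "supp (\<lambda>x. f (p x)) = p -` supp f" by (auto simp: supp_def)
  then show ?thesis using assms by (auto intro: finite_vimageI simp: bij_def)
qed

lemma fsum_add:
  assumes "finite (supp u)" "finite (supp v)" shows "fsum (\<lambda>x. u x + v x) = fsum u + fsum v"
proof -
  let ?F = "supp u \<union> supp v"
  have "fsum (\<lambda>x. u x + v x) = sum u ?F + sum v ?F"
    using assms by (subst fsum_eq_sum[of ?F]) (auto simp: supp_def sum.distrib)
  also have "\<dots> = fsum u + fsum v"
    using assms by (subst (1 2) fsum_eq_sum[of ?F]) (auto simp: supp_def)
  finally show ?thesis .
qed

lemma fsum_cmult: "fsum (\<lambda>x. c * u x) = c * fsum u"
proof (cases "c = 0")
  case False
  then have "supp (\<lambda>x. c * u x) = supp u" by (auto simp: supp_def)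
  then show ?thesis by (simp add: fsum_def sum_distrib_left)
qed (simp add: fsum_def supp_def)

lemma fsum_diff:
  assumes "finite (supp u)" "finite (supp v)" shows "fsum (\<lambda>x. u x - v x) = fsum u - fsum v"
  using fsum_add[OF assms(1) finite_supp_mult_right[OF assms(2), of "\<lambda>_. -1"]] fsum_cmult[of "-1" v]
  by simp

lemma fsum_mono:
  assumes "finite (supp u)" "finite (supp v)" "\<And>x. u x \<le> v x" shows "fsum u \<le> fsum v"
proof -
  let ?F = "supp u \<union> supp v"
  have "fsum u = sum u ?F" using assms by (intro fsum_eq_sum) (auto simp: supp_def)
  also have "\<dots> \<le> sum v ?F" using assms by (intro sum_mono) auto
  also have "\<dots> = fsum v" using assms by (intro fsum_eq_sum[symmetric]) (auto simp: supp_def)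
  finally show ?thesis .
qed

lemma fsum_nonneg: "(\<And>x. 0 \<le> u x) \<Longrightarrow> 0 \<le> fsum u"
  unfolding fsum_def by (rule sum_nonneg)

lemma member_le_fsum: assumes "finite (supp u)" "\<And>x. 0 \<le> u x" shows "u y \<le> fsum u"
proof (cases "u y = 0")
  case True then show ?thesis using fsum_nonneg[of u] assms(2) by simp
next
  case False then show ?thesis unfolding fsum_def using assms by (intro member_le_sum) (auto simp: supp_def)
qed

lemma fsum_sum:
  assumes "finite I" "\<And>i. i \<in> I \<Longrightarrow> finite (supp (u i))"
  shows "fsum (\<lambda>x. \<Sum>i\<in>I. u i x) = (\<Sum>i\<in>I. fsum (u i))"
proof -
  let ?F = "\<Union>i\<in>I. supp (u i)"
  have fin: "finite ?F" using assms by auto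
  have "fsum (\<lambda>x. \<Sum>i\<in>I. u i x) = (\<Sum>x\<in>?F. \<Sum>i\<in>I. u i x)"
    by (rule fsum_eq_sum[OF fin]) (auto simp: supp_def dest: sum.not_neutral_contains_not_neutral)
  also have "\<dots> = (\<Sum>i\<in>I. \<Sum>x\<in>?F. u i x)" by (rule sum.swap)
  also have "\<dots> = (\<Sum>i\<in>I. fsum (u i))"
    by (intro sum.cong refl fsum_eq_sum[symmetric] fin) (auto simp: supp_def)
  finally show ?thesis .
qed

lemma fsum_reindex_bij: assumes "bij p" shows "fsum (\<lambda>x. u (p x)) = fsum u"
proof -
  have "supp (\<lambda>x. u (p x)) = p -` supp u" by (auto simp: supp_def)
  moreover have "bij_betw p (p -` supp u) (supp u)"
    using assms unfolding bij_betw_def bij_def by (auto intro: inj_on_subset simp: image_vimage_eq)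
  ultimately show ?thesis by (simp add: fsum_def sum.reindex_bij_betw)
qed

lemma fsum_delta: "fsum (\<lambda>x. if x = y then c else 0) = c"
  by (subst fsum_eq_sum[of "{y}"]) (auto split: if_splits)

section \<open>Lattice geometry\<close>

lemma vec_set_eq_image_PiE: "{z::'a^'d. \<forall>i. z$i \<in> S i} = vec_lambda ` PiE UNIV S"
proof (intro set_eqI iffI)
  fix z :: "'a^'d" assume "z \<in> {z. \<forall>i. z$i \<in> S i}"
  then have "(\<lambda>i. z$i) \<in> PiE UNIV S" by auto
  then show "z \<in> vec_lambda ` PiE UNIV S" by (metis image_eqI vec_lambda_eta)
qed auto

lemma inj_vec_lambda: "inj vec_lambda"
  by (rule injI) (metis vec_lambda_inverse UNIV_I vec_lambda_inject)

lemma finite_vec_set: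
  "(\<And>i. finite (S i)) \<Longrightarrow> finite {z::'a^'d::finite. \<forall>i. z$i \<in> S i}"
  unfolding vec_set_eq_image_PiE by (intro finite_imageI finite_PiE) auto

lemma card_vec_set:
  "(\<And>i. finite (S i)) \<Longrightarrow> card {z::'a^'d::finite. \<forall>i. z$i \<in> S i} = (\<Prod>i\<in>UNIV. card (S i))"
  unfolding vec_set_eq_image_PiE
  by (subst card_image) (auto intro: inj_on_subset[OF inj_vec_lambda] simp: card_PiE)

lemma sum_vec_set:
  "(\<Sum>z\<in>{z::'a^'d::finite. \<forall>i. z$i \<in> S i}. f z) = (\<Sum>g\<in>PiE UNIV S. f (vec_lambda g))"
  unfolding vec_set_eq_image_PiE by (subst sum.reindex) (auto intro: inj_on_subset[OF inj_vec_lambda])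

definition cube :: "int^'d \<Rightarrow> int \<Rightarrow> (int^'d) set" where
  "cube w r = {z. \<forall>i. \<bar>z$i - w$i\<bar> \<le> r}"

lemma cube_eq_vec_set: "cube w r = {z. \<forall>i. z$i \<in> {w$i - r .. w$i + r}}"
  unfolding cube_def by (auto simp: abs_le_iff; smt (verit))

lemma finite_cube [simp]: "finite (cube (w::int^'d::finite) r)"
  unfolding cube_eq_vec_set by (rule finite_vec_set) auto

lemma mem_cube_commute: "z \<in> cube x r \<longleftrightarrow> x \<in> cube z r"
  unfolding cube_def by (auto simp: abs_minus_commute)

lemma mem_cube_trans: "z \<in> cube x r \<Longrightarrow> x \<in> cube w s \<Longrightarrow> z \<in> cube w (r + s)"
proof -
  assume "z \<in> cube x r" "x \<in> cube w s"
  then have zx: "\<bar>z$i - x$i\<bar> \<le> r" and xw: "\<bar>x$i - w$i\<bar> \<le> s" for i by (auto simp: cube_def)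
  have "\<bar>z$i - w$i\<bar> \<le> r + s" for i using zx[of i] xw[of i] by linarith
  then show ?thesis by (simp add: cube_def)
qed

lemma center_mem_cube: "0 \<le> r \<Longrightarrow> x \<in> cube x r"
  unfolding cube_def by auto

lemma cube_mono: "r \<le> s \<Longrightarrow> cube x r \<subseteq> cube x s"
  unfolding cube_def using order_trans by blast

lemma cube_translate: "cube x r = (\<lambda>y. x + y) ` cube 0 r"
proof (intro set_eqI iffI)
  fix z assume "z \<in> cube x r"
  then have "z - x \<in> cube 0 r" "z = x + (z - x)" by (auto simp: cube_def)
  then show "z \<in> (\<lambda>y. x + y) ` cube 0 r" by blast
qed (auto simp: cube_def)

lemma sum_cube_translate: "(\<Sum>z\<in>cube x r. f z) = (\<Sum>y\<in>cube 0 r. f (x + y))"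
  by (subst cube_translate, subst sum.reindex) (auto simp: inj_on_def)

lemma card_cube_translate: "card (cube (x::int^'d::finite) r) = card (cube (0::int^'d) r)"
  using sum_cube_translate[of "\<lambda>_. 1::nat" x r] by simp

lemma card_cube_pos: "0 \<le> r \<Longrightarrow> 0 < card (cube (x::int^'d::finite) r)"
  using center_mem_cube[of r x] by (auto simp: card_gt_0_iff)

lemma finite_subset_cube: "finite (F :: (int^'d::finite) set) \<Longrightarrow> \<exists>R\<ge>0. F \<subseteq> cube 0 R"
proof -
  assume F: "finite F"
  define R where "R = Max (insert 0 ((\<lambda>(z, i). \<bar>z$i\<bar>) ` (F \<times> UNIV)))"
  have "\<bar>z$i\<bar> \<le> R" if "z \<in> F" for z i
    unfolding R_def using F that by (intro Max_ge) auto
  moreover have "0 \<le> R" unfolding R_def using F by (intro Max_ge) auto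
  ultimately show ?thesis unfolding cube_def by auto
qed

lemma bij_plus_right: "bij (\<lambda>x::'a::ab_group_add. x + y)"
  by (rule bij_betwI[of _ _ _ "\<lambda>x. x - y"]) auto

lemma bij_diff_right: "bij (\<lambda>x::'a::ab_group_add. x - y)"
  by (rule bij_betwI[of _ _ _ "\<lambda>x. x + y"]) auto

lemma sh_nth: "sh n \<mu> s $ i = (if i = \<mu> then n$i + s else n$i)"
  by (simp add: sh_def)

lemma sh_sh [simp]: "sh (sh x \<mu> s) \<mu> t = sh x \<mu> (s + t)"
  by (simp add: sh_def vec_eq_iff)

lemma sh_0 [simp]: "sh x \<mu> 0 = x"
  by (simp add: sh_def vec_eq_iff)

lemma bij_sh: "bij (\<lambda>x. sh x \<mu> s)"
  by (rule bij_betwI[of _ _ _ "\<lambda>x. sh x \<mu> (-s)"]) auto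

lemma eq_sh_iff: "z = sh x \<mu> s \<longleftrightarrow> x = sh z \<mu> (-s)"
  by auto

lemma sh_mem_cube: "\<bar>s\<bar> \<le> r \<Longrightarrow> sh x \<mu> s \<in> cube x r"
  unfolding cube_def by (auto simp: sh_nth)

definition exp_decay :: "real \<Rightarrow> int^'d::finite \<Rightarrow> real" where
  "exp_decay \<rho> z = (\<Prod>i\<in>UNIV. \<rho> ^ nat \<bar>z$i\<bar>)"

lemma exp_decay_nonneg: "0 \<le> \<rho> \<Longrightarrow> 0 \<le> exp_decay \<rho> z"
  unfolding exp_decay_def by (auto intro: prod_nonneg)

lemma exp_decay_le_1: "0 \<le> \<rho> \<Longrightarrow> \<rho> \<le> 1 \<Longrightarrow> exp_decay \<rho> z \<le> 1"
  unfolding exp_decay_def by (auto intro!: prod_le_1 power_le_one)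

lemma exp_decay_eq_power: "exp_decay \<rho> z = \<rho> ^ (\<Sum>i\<in>UNIV. nat \<bar>z$i\<bar>)"
  unfolding exp_decay_def by (simp add: power_sum)

lemma sum_symmetric_geometric_le:
  fixes \<rho> :: real assumes "0 \<le> \<rho>" "\<rho> < 1"
  shows "(\<Sum>j\<in>{-int n..int n}. \<rho> ^ nat \<bar>j\<bar>) \<le> 2 / (1 - \<rho>)"
proof -
  have "(\<Sum>j\<in>{-int n..int n}. \<rho> ^ nat \<bar>j\<bar>) \<le> 2 * (\<Sum>i<Suc n. \<rho> ^ i)"
  proof (induction n)
    case (Suc n)
    have "{-int (Suc n)..int (Suc n)} = insert (-int (Suc n)) (insert (int (Suc n)) {-int n..int n})"
      by auto
    moreover have "nat (int n + 1) = Suc n" "nat (1 + int n) = Suc n" by auto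
    ultimately have "(\<Sum>j\<in>{-int (Suc n)..int (Suc n)}. \<rho> ^ nat \<bar>j\<bar>)
        = 2 * \<rho> ^ Suc n + (\<Sum>j\<in>{-int n..int n}. \<rho> ^ nat \<bar>j\<bar>)"
      by simp
    with Suc show ?case by simp
  qed simp
  also have "(\<Sum>i<Suc n. \<rho> ^ i) = (1 - \<rho> ^ Suc n) / (1 - \<rho>)"
    using assms by (subst sum_gp_strict) auto
  also have "\<dots> \<le> 1 / (1 - \<rho>)" using assms by (intro divide_right_mono) auto
  finally show ?thesis by simp
qed

lemma exp_decay_summable:
  fixes \<rho> :: real assumes "0 \<le> \<rho>" "\<rho> < 1"
  shows "(exp_decay \<rho> :: int^'d::finite \<Rightarrow> real) summable_on UNIV"
proof (rule nonneg_bdd_above_summable_on)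
  show "0 \<le> exp_decay \<rho> z" for z :: "int^'d" using assms by (simp add: exp_decay_nonneg)
  have "sum (exp_decay \<rho>) F \<le> (2 / (1 - \<rho>)) ^ CARD('d)" if F: "finite F" for F :: "(int^'d) set"
  proof -
    obtain R where R: "R \<ge> 0" "F \<subseteq> cube 0 R" using finite_subset_cube[OF F] by blast
    define n where "n = nat R"
    have Rn: "R = int n" using R n_def by simp
    have "sum (exp_decay \<rho>) F \<le> sum (exp_decay \<rho>) (cube (0::int^'d) R)"
      using R assms by (intro sum_mono2) (auto simp: exp_decay_nonneg)
    also have "\<dots> = (\<Sum>g\<in>PiE (UNIV::'d set) (\<lambda>_. {-int n..int n}). \<Prod>i\<in>UNIV. \<rho> ^ nat \<bar>g i\<bar>)"
      unfolding cube_eq_vec_set Rn by (subst sum_vec_set) (auto simp: exp_decay_def)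
    also have "\<dots> = (\<Prod>i\<in>(UNIV::'d set). \<Sum>j\<in>{-int n..int n}. \<rho> ^ nat \<bar>j\<bar>)"
      by (subst prod_sum_PiE) auto
    also have "\<dots> \<le> (\<Prod>i\<in>(UNIV::'d set). 2 / (1 - \<rho>))"
      using assms by (intro prod_mono conjI sum_nonneg sum_symmetric_geometric_le) auto
    finally show ?thesis by simp
  qed
  then show "bdd_above (sum (exp_decay \<rho> :: int^'d \<Rightarrow> real) ` {F. F \<subseteq> UNIV \<and> finite F})"
    by (intro bdd_aboveI2[where M = "(2 / (1 - \<rho>)) ^ CARD('d)"]) auto
qed

lemma exp_decay_minus_commute: "exp_decay \<rho> (x - y) = exp_decay \<rho> (y - x)"
  unfolding exp_decay_def by (simp add: abs_minus_commute)

lemma exp_decay_shift_summable: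
  fixes \<rho> :: real assumes "0 \<le> \<rho>" "\<rho> < 1"
  shows "(\<lambda>z. exp_decay \<rho> (z - w)) summable_on (A :: (int^'d::finite) set)"
proof -
  have "bij_betw (\<lambda>z::int^'d. z - w) UNIV UNIV" using bij_diff_right by (simp add: bij_def)
  then have "(\<lambda>z. exp_decay \<rho> (z - w)) summable_on (UNIV :: (int^'d) set)"
    using summable_on_reindex_bij_betw exp_decay_summable[OF assms] by blast
  then show ?thesis by (rule summable_on_subset) simp
qed

definition in_box :: "int^'d::finite \<Rightarrow> int^'d \<Rightarrow> int^'d \<Rightarrow> bool" where
  "in_box x z p \<longleftrightarrow> (\<forall>i. (x$i \<le> p$i \<and> p$i \<le> z$i) \<or> (z$i \<le> p$i \<and> p$i \<le> x$i))"

definition reflect :: "int \<Rightarrow> 'd::finite \<Rightarrow> int^'d \<Rightarrow> int^'d" where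
  "reflect c \<mu> n = (\<chi> i. if i = \<mu> then c - n$i else n$i)"

lemma reflect_reflect [simp]: "reflect c \<mu> (reflect c \<mu> n) = n"
  by (simp add: reflect_def vec_eq_iff)

lemma bij_betw_reflect: "bij_betw (reflect c \<mu>) UNIV UNIV"
  by (rule bij_betwI[of _ _ _ "reflect c \<mu>"]) auto

lemma inj_on_reflect: "inj_on (reflect c \<mu>) A"
  by (rule inj_onI) (metis reflect_reflect)

lemma Pref_eq_reflect: "Pref \<mu> = reflect (-1) \<mu>"
  by (rule ext) (simp add: Pref_def reflect_def)

lemma Pbar_eq_reflect: "Pbar L m \<mu> = reflect (2 * int L ^ m - 1) \<mu>"
  by (rule ext) (simp add: Pbar_def reflect_def)

lemma sh_reflect: "sh (reflect c \<mu> x) \<nu> s = reflect c \<mu> (sh x \<nu> (if \<nu> = \<mu> then -s else s))"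
  by (simp add: sh_def reflect_def vec_eq_iff)

section \<open>Symmetric coercive kernels of finite range\<close>

definition kernel_apply ::
    "(int^'d::finite \<Rightarrow> int^'d \<Rightarrow> real) \<Rightarrow> int \<Rightarrow> (int^'d \<Rightarrow> real) \<Rightarrow> int^'d \<Rightarrow> real" where
  "kernel_apply K r u x = (\<Sum>z\<in>cube x r. K x z * u z)"

lemma kernel_apply_diff:
  "kernel_apply K r (\<lambda>z. u z - v z) x = kernel_apply K r u x - kernel_apply K r v x"
  unfolding kernel_apply_def by (simp add: right_diff_distrib sum_subtractf)

lemma kernel_apply_cmult: "kernel_apply K r (\<lambda>z. c * u z) x = c * kernel_apply K r u x"
  unfolding kernel_apply_def by (simp add: sum_distrib_left mult_ac)

lemma finite_supp_kernel_apply: "finite (supp u) \<Longrightarrow> finite (supp (kernel_apply K r u))"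
proof (rule finite_suppI[of "\<Union>z\<in>supp u. cube z r"])
  fix x assume "kernel_apply K r u x \<noteq> 0"
  then obtain z where "z \<in> cube x r" "K x z * u z \<noteq> 0"
    unfolding kernel_apply_def by (rule sum.not_neutral_contains_not_neutral)
  then show "x \<in> (\<Union>z\<in>supp u. cube z r)" by (auto simp: supp_def mem_cube_commute)
qed auto

lemma fsum_kernel_apply_symmetric:
  assumes sym: "\<And>x z. K x z = K z x" and local: "\<And>x z. z \<notin> cube x r \<Longrightarrow> K x z = 0"
    and fu: "finite (supp u)"
  shows "fsum (\<lambda>x. u x * kernel_apply K r v x) = fsum (\<lambda>x. kernel_apply K r u x * v x)"
proof -
  define S where "S = supp u"
  define W where "W = (\<Union>x\<in>S. cube x r)"
  have finS: "finite S" and finW: "finite W" using fu by (auto simp: S_def W_def)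
  have uS: "u x = 0" if "x \<notin> S" for x using that by (simp add: S_def supp_def)
  have "fsum (\<lambda>x. u x * kernel_apply K r v x) = (\<Sum>x\<in>S. u x * kernel_apply K r v x)"
    by (rule fsum_eq_sum[OF finS]) (simp add: S_def supp_def)
  also have "\<dots> = (\<Sum>x\<in>S. \<Sum>z\<in>W. u x * K x z * v z)"
  proof (rule sum.cong[OF refl])
    fix x assume "x \<in> S"
    then have "kernel_apply K r v x = (\<Sum>z\<in>W. K x z * v z)"
      unfolding kernel_apply_def using finW local by (intro sum.mono_neutral_left) (auto simp: W_def)
    then show "u x * kernel_apply K r v x = (\<Sum>z\<in>W. u x * K x z * v z)"
      by (simp add: sum_distrib_left mult.assoc)
  qed
  also have "\<dots> = (\<Sum>z\<in>W. \<Sum>x\<in>S. u x * K x z * v z)" by (rule sum.swap)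
  also have "\<dots> = (\<Sum>z\<in>W. kernel_apply K r u z * v z)"
  proof (rule sum.cong[OF refl])
    fix z
    have "kernel_apply K r u z = (\<Sum>x\<in>cube z r \<union> S. K z x * u x)"
      unfolding kernel_apply_def by (rule sum.mono_neutral_left) (use finS local in simp_all)
    also have "\<dots> = (\<Sum>x\<in>S. K z x * u x)"
      by (rule sum.mono_neutral_right) (use finS uS in simp_all)
    finally show "(\<Sum>x\<in>S. u x * K x z * v z) = kernel_apply K r u z * v z"
      by (simp add: sum_distrib_left sum_distrib_right sym mult_ac)
  qed
  also have "\<dots> = fsum (\<lambda>x. kernel_apply K r u x * v x)"
  proof (rule fsum_eq_sum[symmetric, OF finW])
    fix x assume "kernel_apply K r u x * v x \<noteq> 0"
    then obtain z where "z \<in> cube x r" "u z \<noteq> 0"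
      unfolding kernel_apply_def by (auto elim: sum.not_neutral_contains_not_neutral)
    then show "x \<in> W" by (auto simp: W_def S_def supp_def mem_cube_commute)
  qed
  finally show ?thesis .
qed

locale coercive_kernel =
  fixes K :: "int^'d::finite \<Rightarrow> int^'d \<Rightarrow> real" and r :: int and B c :: real
  assumes radius_pos: "0 < r"
    and kernel_sym: "K x z = K z x"
    and kernel_local: "z \<notin> cube x r \<Longrightarrow> K x z = 0"
    and kernel_bounded: "\<bar>K x z\<bar> \<le> B"
    and coercivity_pos: "0 < c"
    and coercive:
      "finite (supp u) \<Longrightarrow> c * fsum (\<lambda>x. (u x)\<^sup>2) \<le> fsum (\<lambda>x. u x * kernel_apply K r u x)"
begin

abbreviation A :: "(int^'d \<Rightarrow> real) \<Rightarrow> int^'d \<Rightarrow> real" where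
  "A \<equiv> kernel_apply K r"

definition unit_at :: "int^'d \<Rightarrow> int^'d \<Rightarrow> real" where
  "unit_at w z = (if z = w then 1 else 0)"

lemma finite_supp_unit_at: "finite (supp (unit_at w))"
  by (rule finite_suppI[of "{w}"]) (auto simp: unit_at_def split: if_splits)

lemma apply_unit_at: "A (unit_at w) x = K x w"
proof (cases "w \<in> cube x r")
  case True then show ?thesis unfolding kernel_apply_def unit_at_def by (simp add: if_distrib cong: if_cong)
next
  case False then show ?thesis
    using kernel_local[OF False] by (auto simp: kernel_apply_def unit_at_def intro!: sum.neutral)
qed

lemma coercivity_le_bound: "c \<le> B"
proof -
  fix w :: "int^'d"
  have "(\<lambda>x. (unit_at w x)\<^sup>2) = (\<lambda>x. if x = w then 1 else 0)" by (auto simp: unit_at_def)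
  then have "c = c * fsum (\<lambda>x. (unit_at w x)\<^sup>2)" by (simp add: fsum_delta)
  also have "\<dots> \<le> fsum (\<lambda>x. unit_at w x * A (unit_at w) x)"
    by (rule coercive[OF finite_supp_unit_at])
  also have "(\<lambda>x. unit_at w x * A (unit_at w) x) = (\<lambda>x. if x = w then K w w else 0)"
    by (auto simp: unit_at_def apply_unit_at)
  also have "fsum \<dots> = K w w" by (rule fsum_delta)
  also have "\<dots> \<le> B" using kernel_bounded[of w w] by simp
  finally show ?thesis .
qed

lemma kernel_square_le: "(K x z)\<^sup>2 \<le> B\<^sup>2"
  using power_mono[OF kernel_bounded abs_ge_zero, of x z 2] by simp

definition op_bound :: real where
  "op_bound = (real (card (cube (0::int^'d) r)) * B)\<^sup>2"

lemma fsum_apply_square_le: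
  assumes fu: "finite (supp u)"
  shows "fsum (\<lambda>x. (A u x)\<^sup>2) \<le> op_bound * fsum (\<lambda>x. (u x)\<^sup>2)"
proof -
  define N where "N = real (card (cube (0::int^'d) r))"
  have pt: "(A u x)\<^sup>2 \<le> N * B\<^sup>2 * (\<Sum>y\<in>cube 0 r. (u (x + y))\<^sup>2)" for x
  proof -
    have "(A u x)\<^sup>2 = (\<Sum>z\<in>cube x r. 1 * (K x z * u z))\<^sup>2" by (simp add: kernel_apply_def)
    also have "\<dots> \<le> (\<Sum>z\<in>cube x r. 1\<^sup>2) * (\<Sum>z\<in>cube x r. (K x z * u z)\<^sup>2)"
      by (rule Cauchy_Schwarz_ineq_sum)
    also have "\<dots> \<le> N * (\<Sum>z\<in>cube x r. B\<^sup>2 * (u z)\<^sup>2)"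
    proof (rule mult_mono)
      show "(\<Sum>z\<in>cube x r. (1::real)\<^sup>2) \<le> N" unfolding N_def using card_cube_translate[of x r] by simp
      show "(\<Sum>z\<in>cube x r. (K x z * u z)\<^sup>2) \<le> (\<Sum>z\<in>cube x r. B\<^sup>2 * (u z)\<^sup>2)"
        using kernel_square_le by (intro sum_mono) (auto simp: power_mult_distrib intro: mult_right_mono)
    qed (auto simp: N_def intro: sum_nonneg)
    finally show ?thesis by (simp add: sum_cube_translate[of _ x r] sum_distrib_left mult.assoc)
  qed
  have shifted: "finite (supp (\<lambda>x. u (x + y)))" for y
    using finite_supp_compose_bij[OF bij_plus_right fu] .
  have "fsum (\<lambda>x. (A u x)\<^sup>2) \<le> fsum (\<lambda>x. N * B\<^sup>2 * (\<Sum>y\<in>cube 0 r. (u (x + y))\<^sup>2))"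
    using fu shifted
    by (intro fsum_mono pt finite_supp_power2 finite_supp_kernel_apply finite_supp_mult_right
        finite_supp_sum finite_cube)
  also have "\<dots> = N * B\<^sup>2 * (\<Sum>y\<in>cube (0::int^'d) r. fsum (\<lambda>x. (u (x + y))\<^sup>2))"
    using shifted by (simp add: fsum_cmult fsum_sum finite_supp_power2)
  also have "\<dots> = op_bound * fsum (\<lambda>x. (u x)\<^sup>2)"
    using fsum_reindex_bij[OF bij_plus_right, of "\<lambda>x. (u x)\<^sup>2"]
    by (simp add: N_def op_bound_def power2_eq_square)
  finally show ?thesis .
qed

definition step :: real where
  "step = c / op_bound"

definition rate :: real where
  "rate = 1 - c\<^sup>2 / op_bound"

lemma c_sq_le_op_bound: "c\<^sup>2 \<le> op_bound"
proof -
  have "0 < card (cube (0::int^'d) r)" using card_cube_pos[of r] radius_pos by simp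
  then have "1 \<le> real (card (cube (0::int^'d) r))" by simp
  then have "c \<le> real (card (cube (0::int^'d) r)) * B"
    using coercivity_le_bound coercivity_pos by (smt (verit) mult_le_cancel_right1)
  then show ?thesis unfolding op_bound_def using coercivity_pos by (intro power_mono) auto
qed

lemma op_bound_pos: "0 < op_bound"
  using c_sq_le_op_bound coercivity_pos by (smt (verit) zero_less_power)

lemma step_pos: "0 < step"
  unfolding step_def using coercivity_pos op_bound_pos by simp

lemma rate_nonneg: "0 \<le> rate" and rate_less_1: "rate < 1"
  unfolding rate_def using c_sq_le_op_bound op_bound_pos coercivity_pos by (auto simp: field_simps)

definition richardson :: "(int^'d \<Rightarrow> real) \<Rightarrow> int^'d \<Rightarrow> real" where
  "richardson u x = u x - step * A u x"

lemma richardson_contraction: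
  assumes fu: "finite (supp u)"
  shows "fsum (\<lambda>x. (richardson u x)\<^sup>2) \<le> rate * fsum (\<lambda>x. (u x)\<^sup>2)"
proof -
  define U where "U = fsum (\<lambda>x. (u x)\<^sup>2)"
  define Q where "Q = fsum (\<lambda>x. u x * A u x)"
  define A2 where "A2 = fsum (\<lambda>x. (A u x)\<^sup>2)"
  have fA: "finite (supp (A u))" using fu by (rule finite_supp_kernel_apply)
  have "(\<lambda>x. (richardson u x)\<^sup>2)
      = (\<lambda>x. ((u x)\<^sup>2 - 2 * step * (u x * A u x)) + step\<^sup>2 * (A u x)\<^sup>2)"
    unfolding richardson_def by (rule ext) (simp add: power2_diff algebra_simps power2_eq_square)
  then have "fsum (\<lambda>x. (richardson u x)\<^sup>2) = U - 2 * step * Q + step\<^sup>2 * A2"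
    unfolding U_def Q_def A2_def using fu fA
    by (simp add: fsum_add fsum_diff fsum_cmult finite_supp_diff finite_supp_mult_left
        finite_supp_power2 finite_supp_mult_right)
  also have "\<dots> \<le> U - 2 * step * (c * U) + step\<^sup>2 * (op_bound * U)"
  proof -
    have "c * U \<le> Q" unfolding U_def Q_def by (rule coercive[OF fu])
    moreover have "A2 \<le> op_bound * U" unfolding A2_def U_def by (rule fsum_apply_square_le[OF fu])
    ultimately show ?thesis using step_pos by (smt (verit) mult_left_mono zero_le_power2)
  qed
  also have "\<dots> = rate * U"
    unfolding step_def rate_def using op_bound_pos by (simp add: field_simps power2_eq_square)
  finally show ?thesis unfolding U_def .
qed

definition iterate :: "int^'d \<Rightarrow> nat \<Rightarrow> int^'d \<Rightarrow> real" where
  "iterate w n = (richardson ^^ n) (unit_at w)"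

lemma iterate_0: "iterate w 0 = unit_at w"
  by (simp add: iterate_def)

lemma iterate_Suc: "iterate w (Suc n) = richardson (iterate w n)"
  by (simp add: iterate_def)

lemma iterate_support: "iterate w n z \<noteq> 0 \<Longrightarrow> z \<in> cube w (int n * r)"
proof (induction n arbitrary: z)
  case 0 then show ?case by (auto simp: iterate_0 unit_at_def cube_def split: if_splits)
next
  case (Suc n)
  from Suc.prems have "iterate w n z \<noteq> 0 \<or> A (iterate w n) z \<noteq> 0"
    by (auto simp: iterate_Suc richardson_def)
  then show ?case
  proof
    assume "iterate w n z \<noteq> 0"
    then have "z \<in> cube w (int n * r)" by (rule Suc.IH)
    then show ?thesis using cube_mono[of "int n * r" "int (Suc n) * r"] radius_pos by auto
  next
    assume "A (iterate w n) z \<noteq> 0"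
    then obtain x where "x \<in> cube z r" "K z x * iterate w n x \<noteq> 0"
      unfolding kernel_apply_def by (rule sum.not_neutral_contains_not_neutral)
    then have "z \<in> cube x r" "x \<in> cube w (int n * r)"
      using Suc.IH mem_cube_commute by auto
    then have "z \<in> cube w (r + int n * r)" by (rule mem_cube_trans)
    then show ?thesis by (simp add: algebra_simps)
  qed
qed

lemma finite_supp_iterate: "finite (supp (iterate w n))"
  by (rule finite_suppI[of "cube w (int n * r)"]) (auto intro: iterate_support)

lemma fsum_iterate_square_le: "fsum (\<lambda>z. (iterate w n z)\<^sup>2) \<le> rate ^ n"
proof (induction n)
  case 0
  have "(\<lambda>z. (iterate w 0 z)\<^sup>2) = (\<lambda>z. if z = w then 1 else 0)"
    by (auto simp: iterate_0 unit_at_def)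
  then show ?case by (simp add: fsum_delta)
next
  case (Suc n)
  have "fsum (\<lambda>z. (iterate w (Suc n) z)\<^sup>2) \<le> rate * fsum (\<lambda>z. (iterate w n z)\<^sup>2)"
    unfolding iterate_Suc by (rule richardson_contraction[OF finite_supp_iterate])
  also have "\<dots> \<le> rate * rate ^ n" using Suc rate_nonneg by (intro mult_left_mono) auto
  finally show ?case by simp
qed

lemma abs_iterate_le: "\<bar>iterate w n z\<bar> \<le> sqrt rate ^ n"
proof -
  have "(iterate w n z)\<^sup>2 \<le> rate ^ n"
    using member_le_fsum[OF finite_supp_power2[OF finite_supp_iterate]] fsum_iterate_square_le
    by (meson order_trans zero_le_power2)
  then have "\<bar>iterate w n z\<bar> \<le> sqrt (rate ^ n)" using real_sqrt_le_mono by fastforce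
  then show ?thesis by (simp add: real_sqrt_power)
qed

text \<open>Splitting the geometric bound as \<open>s\<^sup>n \<cdot> s\<^sup>n\<close> with \<open>s = rate\<^sup>1\<^sup>/\<^sup>4\<close>, one factor is kept
  for summability in \<open>n\<close> and the other, since the support of \<open>iterate w n\<close> has radius
  \<open>n r\<close>, is traded for exponential decay in \<open>z - w\<close>.\<close>

definition decay_base :: real where
  "decay_base = root (nat (int CARD('d) * r)) (sqrt (sqrt rate))"

lemma decay_base_nonneg: "0 \<le> decay_base" and decay_base_less_1: "decay_base < 1"
  unfolding decay_base_def using rate_nonneg rate_less_1 radius_pos
  by (auto intro: real_root_ge_zero simp: real_root_lt_1_iff)

lemma abs_iterate_le_decay:
  "\<bar>iterate w n z\<bar> \<le> sqrt (sqrt rate) ^ n * exp_decay decay_base (z - w)"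
proof (cases "iterate w n z = 0")
  case True then show ?thesis using decay_base_nonneg rate_nonneg by (simp add: exp_decay_nonneg)
next
  case False
  define s where "s = sqrt (sqrt rate)"
  define N where "N = nat (int CARD('d) * r)"
  have s0: "0 \<le> s" using rate_nonneg by (simp add: s_def)
  have "(\<Sum>i\<in>(UNIV::'d set). nat \<bar>(z - w)$i\<bar>) \<le> (\<Sum>i\<in>(UNIV::'d set). nat (int n * r))"
    using iterate_support[OF False] unfolding cube_def by (intro sum_mono) (auto intro: nat_mono)
  also have "\<dots> = N * n" unfolding N_def using radius_pos by (simp add: nat_mult_distrib)
  finally have "decay_base ^ (N * n) \<le> exp_decay decay_base (z - w)"
    unfolding exp_decay_eq_power using decay_base_nonneg decay_base_less_1
    by (intro power_decreasing) auto
  moreover have "decay_base ^ (N * n) = s ^ n"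
    using radius_pos rate_nonneg by (simp add: decay_base_def N_def s_def power_mult)
  ultimately have "s ^ n \<le> exp_decay decay_base (z - w)" by simp
  moreover have "\<bar>iterate w n z\<bar> \<le> s ^ n * s ^ n"
    using abs_iterate_le[of w n z] rate_nonneg
    by (simp add: s_def power_mult_distrib[symmetric] real_sqrt_mult[symmetric])
  ultimately show ?thesis unfolding s_def[symmetric] using s0
    by (meson mult_left_mono order_trans zero_le_power)
qed

definition green :: "int^'d \<Rightarrow> int^'d \<Rightarrow> real" where
  "green w z = step * suminf (\<lambda>n. iterate w n z)"

definition green_bound :: real where
  "green_bound = step / (1 - sqrt (sqrt rate))"

lemma abs_green_le: "\<bar>green w z\<bar> \<le> green_bound * exp_decay decay_base (z - w)"
proof -
  define D where "D = exp_decay decay_base (z - w)"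
  define s where "s = sqrt (sqrt rate)"
  have s: "0 \<le> s" "s < 1" using rate_nonneg rate_less_1 by (auto simp: s_def)
  have geom: "summable (\<lambda>n. s ^ n * D)" using s by (simp add: summable_mult2)
  have bound: "norm \<bar>iterate w n z\<bar> \<le> s ^ n * D" for n
    using abs_iterate_le_decay by (simp add: s_def D_def)
  have abs_summable: "summable (\<lambda>n. \<bar>iterate w n z\<bar>)"
    by (rule summable_comparison_test'[OF geom bound])
  have "\<bar>suminf (\<lambda>n. iterate w n z)\<bar> \<le> (\<Sum>n. \<bar>iterate w n z\<bar>)"
    by (rule summable_rabs[OF abs_summable])
  also have "\<dots> \<le> (\<Sum>n. s ^ n * D)"
    using bound by (intro suminf_le abs_summable geom) simp
  also have "\<dots> = D / (1 - s)" using s by (simp add: suminf_mult2[symmetric] suminf_geometric)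
  finally have "step * \<bar>suminf (\<lambda>n. iterate w n z)\<bar> \<le> step * (D / (1 - s))"
    using step_pos by (intro mult_left_mono) auto
  then show ?thesis using step_pos unfolding green_def green_bound_def D_def s_def by (simp add: abs_mult)
qed

lemma summable_iterate: "summable (\<lambda>n. iterate w n z)"
  by (rule summable_comparison_test'[where N = 0, OF summable_geometric[of "sqrt rate"]])
     (use abs_iterate_le rate_nonneg rate_less_1 in auto)

text \<open>The Neumann series of the Richardson iteration telescopes under \<open>A\<close>.\<close>

lemma apply_green: "A (green w) z = unit_at w z"
proof -
  have series: "(\<lambda>n. \<Sum>x\<in>cube z r. K z x * iterate w n x)
      sums (\<Sum>x\<in>cube z r. K z x * suminf (\<lambda>n. iterate w n x))"
    by (intro sums_sum sums_mult summable_sums summable_iterate)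
  have "(\<Sum>x\<in>cube z r. K z x * iterate w n x) = (iterate w n z - iterate w (Suc n) z) / step" for n
    using step_pos by (simp add: iterate_Suc richardson_def kernel_apply_def field_simps)
  moreover have "(\<lambda>n. (iterate w n z - iterate w (Suc n) z) / step) sums (iterate w 0 z / step)"
    using telescope_sums'[OF summable_LIMSEQ_zero[OF summable_iterate]] by (simp add: sums_divide)
  ultimately have "(\<Sum>x\<in>cube z r. K z x * suminf (\<lambda>n. iterate w n x)) = iterate w 0 z / step"
    using series sums_unique2 by fastforce
  moreover have "A (green w) z = step * (\<Sum>x\<in>cube z r. K z x * suminf (\<lambda>n. iterate w n x))"
    by (simp add: kernel_apply_def green_def sum_distrib_left mult_ac)
  ultimately show ?thesis using step_pos by (simp add: iterate_0)
qed

lemma green_square_summable: "(\<lambda>z. (green w z)\<^sup>2) summable_on UNIV"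
proof (rule summable_on_comparison_test)
  show "(\<lambda>z. green_bound\<^sup>2 * exp_decay decay_base (z - w)) summable_on UNIV"
    using decay_base_nonneg decay_base_less_1
    by (intro summable_on_cmult_right exp_decay_shift_summable)
  fix z
  have D: "0 \<le> exp_decay decay_base (z - w)" "exp_decay decay_base (z - w) \<le> 1"
    using decay_base_nonneg decay_base_less_1 by (auto simp: exp_decay_nonneg exp_decay_le_1)
  have "(green w z)\<^sup>2 \<le> (green_bound * exp_decay decay_base (z - w))\<^sup>2"
    using abs_green_le[of w z] by (metis abs_ge_zero power2_abs power_mono)
  also have "\<dots> = green_bound\<^sup>2 * (exp_decay decay_base (z - w) * exp_decay decay_base (z - w))"
    by (simp add: power_mult_distrib power2_eq_square)
  also have "\<dots> \<le> green_bound\<^sup>2 * exp_decay decay_base (z - w)"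
    using D by (intro mult_left_mono) (auto simp: mult_left_le_one_le)
  finally show "(green w z)\<^sup>2 \<le> green_bound\<^sup>2 * exp_decay decay_base (z - w)" .
qed simp

text \<open>Uniqueness: pairing a null solution \<open>h\<close> with \<open>iterate x n\<close> and moving \<open>A\<close> across
  by symmetry shows \<open>h x = \<langle>iterate x n, h\<rangle>\<close> for all \<open>n\<close>, and the right-hand side is
  at most \<open>rate\<^sup>n\<^sup>/\<^sup>2 \<parallel>h\<parallel>\<close> by Cauchy--Schwarz.\<close>

lemma l2_null_solution_eq_0:
  assumes sq: "(\<lambda>z. (h z)\<^sup>2) summable_on UNIV" and null: "\<And>z. A h z = 0"
  shows "h x = 0"
proof -
  define H where "H = infsum (\<lambda>z. (h z)\<^sup>2) UNIV"
  have pairing: "fsum (\<lambda>z. iterate x n z * h z) = h x" for n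
  proof (induction n)
    case 0
    have "fsum (\<lambda>z. iterate x 0 z * h z) = (\<Sum>z\<in>{x}. iterate x 0 z * h z)"
      by (rule fsum_eq_sum) (auto simp: iterate_0 unit_at_def split: if_splits)
    then show ?case by (simp add: iterate_0 unit_at_def)
  next
    case (Suc n)
    define v where "v = iterate x n"
    have fv: "finite (supp v)" unfolding v_def by (rule finite_supp_iterate)
    have "fsum (\<lambda>z. A v z * h z) = fsum (\<lambda>z. v z * A h z)"
      using fsum_kernel_apply_symmetric[OF kernel_sym kernel_local fv] by simp
    then have orth: "fsum (\<lambda>z. A v z * h z) = 0" by (simp add: null fsum_def)
    have "(\<lambda>z. iterate x (Suc n) z * h z) = (\<lambda>z. v z * h z - step * (A v z * h z))"
      unfolding v_def by (rule ext) (simp add: iterate_Suc richardson_def algebra_simps)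
    moreover have "finite (supp (\<lambda>z. v z * h z))" using fv by (rule finite_supp_mult_left)
    moreover have "finite (supp (\<lambda>z. step * (A v z * h z)))"
      using fv by (intro finite_supp_mult_right finite_supp_mult_left finite_supp_kernel_apply)
    moreover have "fsum (\<lambda>z. v z * h z) = h x" using Suc.IH by (simp add: v_def)
    ultimately show ?case using orth by (simp add: fsum_diff fsum_cmult)
  qed
  have bound: "(h x)\<^sup>2 \<le> rate ^ n * H" for n
  proof -
    define S where "S = supp (iterate x n)"
    have fS: "finite S" unfolding S_def by (rule finite_supp_iterate)
    have "h x = (\<Sum>z\<in>S. iterate x n z * h z)"
      using pairing[of n] fsum_eq_sum[OF fS, of "\<lambda>z. iterate x n z * h z"] by (auto simp: S_def supp_def)
    then have "(h x)\<^sup>2 \<le> (\<Sum>z\<in>S. (iterate x n z)\<^sup>2) * (\<Sum>z\<in>S. (h z)\<^sup>2)"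
      by (metis Cauchy_Schwarz_ineq_sum)
    also have "(\<Sum>z\<in>S. (iterate x n z)\<^sup>2) = fsum (\<lambda>z. (iterate x n z)\<^sup>2)"
      by (rule fsum_eq_sum[symmetric, OF fS]) (simp add: S_def supp_def)
    also have "\<dots> * (\<Sum>z\<in>S. (h z)\<^sup>2) \<le> rate ^ n * H"
      unfolding H_def using fsum_iterate_square_le rate_nonneg
      by (intro mult_mono finite_sum_le_infsum[OF sq fS] sum_nonneg) auto
    finally show ?thesis .
  qed
  have "(\<lambda>n. rate ^ n * H) \<longlonglongrightarrow> 0 * H"
    using rate_nonneg rate_less_1 by (intro tendsto_mult tendsto_const LIMSEQ_power_zero) simp
  then have "(h x)\<^sup>2 \<le> 0 * H" using bound by (intro LIMSEQ_le_const) auto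
  then show ?thesis by simp
qed

lemma l2_solution_unique:
  assumes "(\<lambda>z. (g z)\<^sup>2) summable_on UNIV" "(\<lambda>z. (g' z)\<^sup>2) summable_on UNIV"
    and "\<And>z. A g z = A g' z"
  shows "g = g'"
proof
  fix x
  have "(\<lambda>z. (g z - g' z)\<^sup>2) summable_on UNIV"
  proof (rule summable_on_comparison_test)
    show "(\<lambda>z. 2 * (g z)\<^sup>2 + 2 * (g' z)\<^sup>2) summable_on UNIV"
      using assms by (intro summable_on_add summable_on_cmult_right) auto
    show "(g z - g' z)\<^sup>2 \<le> 2 * (g z)\<^sup>2 + 2 * (g' z)\<^sup>2" for z
      using zero_le_power2[of "g z + g' z"] by (simp add: power2_diff power2_sum)
  qed simp
  then have "g x - g' x = 0"
    by (rule l2_null_solution_eq_0[where h = "\<lambda>z. g z - g' z"]) (simp add: kernel_apply_diff assms(3))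
  then show "g x = g' x" by simp
qed

end

section \<open>The block-averaged operator on \<open>\<eta>\<int>\<^sup>d\<close>\<close>

lemma int_div_eq_iff: assumes "(e::int) > 0" shows "z div e = b \<longleftrightarrow> e * b \<le> z \<and> z < e * b + e"
proof -
  have "(z - e * b) div e = z div e - b"
    using div_mult_self1[of e z "-b"] assms by (simp add: algebra_simps)
  then have "z div e = b \<longleftrightarrow> (z - e * b) div e = 0" by simp
  also have "\<dots> \<longleftrightarrow> 0 \<le> z - e * b \<and> z - e * b < e" using assms by (auto simp: zdiv_eq_0_iff)
  finally show ?thesis by auto
qed

lemma sum_indicator_mult:
  "finite A \<Longrightarrow> (\<Sum>z\<in>A. (if z = p then 1 else 0) * g z) = (if p \<in> A then (g p :: real) else 0)"
  by (simp add: if_distrib[of "\<lambda>t. t * _"] sum.delta' cong: if_cong)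

lemma int_div_reflect:
  assumes "(e::int) > 0" "e dvd c" shows "(c - 1 - z) div e = c div e - 1 - z div e"
proof -
  obtain q where c: "c = e * q" using assms by auto
  define t where "t = z div e"
  have "e * t \<le> z" "z < e * t + e" using int_div_eq_iff[OF assms(1), of z t] t_def by auto
  then have "(c - 1 - z) div e = q - 1 - t"
    unfolding int_div_eq_iff[OF assms(1)] c by (simp add: algebra_simps)
  then show ?thesis using c assms(1) t_def by simp
qed

locale block_operator =
  fixes L k :: nat and a mubar0 :: real
  assumes L_gt_1: "L > 1" and k_ge_1: "k \<ge> 1" and a_pos: "0 < a" and mubar0_nonneg: "mubar0 \<ge> 0"
begin

abbreviation el :: int where "el \<equiv> int L ^ k"
abbreviation e2 :: real where "e2 \<equiv> eta L k powi (-2)"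
abbreviation mk :: real where "mk \<equiv> mubar_k L k mubar0"
abbreviation ak :: real where "ak \<equiv> a_k L k a"

abbreviation block_avg :: "(int^'d::finite \<Rightarrow> real) \<Rightarrow> int^'d \<Rightarrow> real" where
  "block_avg u \<equiv> Qk_adj L k (Qk L k u)"

lemma el_pos: "el > 0" using L_gt_1 by simp
lemma el_ge_1: "el \<ge> 1" using L_gt_1 by (simp add: one_le_power)
lemma e2_pos: "e2 > 0" using L_gt_1 by (simp add: eta_def)
lemma mk_nonneg: "mk \<ge> 0" using mubar0_nonneg by (simp add: mubar_k_def)

lemma ak_pos: "ak > 0"
proof -
  have i: "0 < inverse (real L)" "inverse (real L) < 1" using L_gt_1 by (auto simp: inverse_less_1_iff)
  have "real L powi (-2) = inverse (real L) ^ 2"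
    and "real L powi (- 2 * int k) = inverse (real L) ^ (2 * k)"
    by (simp_all add: power_int_def nat_mult_distrib)
  moreover have "inverse (real L) ^ 2 < 1" "inverse (real L) ^ (2 * k) < 1"
    using i k_ge_1 by (simp_all add: power_less_one_iff)
  ultimately show ?thesis using a_pos by (simp add: a_k_def)
qed

lemma mem_Blk_iff: "z \<in> Blk L k b \<longleftrightarrow> blkof L k z = b"
  unfolding Blk_def blkof_def vec_eq_iff using int_div_eq_iff[OF el_pos] by auto

lemma finite_Blk [simp]: "finite (Blk L k (b::int^'d::finite))"
  unfolding Blk_def by (rule finite_vec_set[where S = "\<lambda>i. {el * b$i ..< el * b$i + el}", simplified])

lemma block_weight_card: "(1 / real L ^ k) ^ CARD('d) * real (card (Blk L k (b::int^'d::finite))) = 1"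
proof -
  have "card (Blk L k b) = (L ^ k) ^ CARD('d)"
    unfolding Blk_def using card_vec_set[where S = "\<lambda>i. {el * b$i ..< el * b$i + el}"]
    by (simp add: nat_power_eq)
  then show ?thesis using L_gt_1 by (simp add: power_divide power_mult[symmetric] mult.commute)
qed

lemma same_block_mem_cube: assumes "blkof L k z = blkof L k x" shows "z \<in> cube x el"
proof -
  have "z \<in> Blk L k (blkof L k x)" "x \<in> Blk L k (blkof L k x)" using assms mem_Blk_iff by auto
  then have "\<bar>z$i - x$i\<bar> \<le> el" for i unfolding Blk_def by (smt (verit) mem_Collect_eq)
  then show ?thesis unfolding cube_def by auto
qed

lemma block_avg_eq_sum: "block_avg u x = (\<Sum>z\<in>Blk L k (blkof L k x). (1 / real L ^ k) ^ CARD('d) * u z)"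
  for x :: "int^'d::finite"
  by (simp add: Qk_adj_def Qk_def)

definition adjacency :: "int^'d::finite \<Rightarrow> int^'d \<Rightarrow> real" where
  "adjacency x z = (\<Sum>\<mu>\<in>UNIV. (if z = sh x \<mu> 1 then 1 else 0) + (if z = sh x \<mu> (-1) then 1 else 0))"

definition block_kernel :: "int^'d::finite \<Rightarrow> int^'d \<Rightarrow> real" where
  "block_kernel x z = (1 / real L ^ k) ^ CARD('d) * (if blkof L k z = blkof L k x then 1 else 0)"

definition free_kernel :: "int^'d::finite \<Rightarrow> int^'d \<Rightarrow> real" where
  "free_kernel x z = e2 * (2 * real CARD('d) * (if z = x then 1 else 0) - adjacency x z)
     + mk * (if z = x then 1 else 0) + ak * block_kernel x z"

lemma adjacency_sym: "adjacency x z = adjacency z x"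
  unfolding adjacency_def using eq_sh_iff[of z x] by (intro sum.cong) auto

lemma free_kernel_sym: "free_kernel x z = free_kernel z x"
  by (auto simp: free_kernel_def block_kernel_def adjacency_sym)

lemma free_kernel_local: assumes "z \<notin> cube x el" shows "free_kernel x z = 0"
proof -
  have "z \<noteq> x" using assms center_mem_cube[of el x] el_pos by auto
  moreover have "adjacency x z = 0"
    unfolding adjacency_def using assms sh_mem_cube[of 1 el x] sh_mem_cube[of "-1" el x] el_pos
    by (intro sum.neutral) auto
  ultimately show ?thesis
    using assms same_block_mem_cube by (auto simp: free_kernel_def block_kernel_def)
qed

lemma free_kernel_bounded:
  "\<bar>free_kernel x z\<bar> \<le> e2 * (4 * real CARD('d)) + mk + ak" for x z :: "int^'d::finite"
proof -
  have "0 \<le> adjacency x z" unfolding adjacency_def by (intro sum_nonneg) auto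
  moreover have "adjacency x z \<le> (\<Sum>\<mu>\<in>(UNIV::'d set). 2)" unfolding adjacency_def by (intro sum_mono) auto
  ultimately have "\<bar>2 * real CARD('d) * (if z = x then 1 else 0) - adjacency x z\<bar> \<le> 4 * real CARD('d)"
    by (auto simp: abs_le_iff)
  then have "\<bar>e2 * (2 * real CARD('d) * (if z = x then 1 else 0) - adjacency x z)\<bar> \<le> e2 * (4 * real CARD('d))"
    using e2_pos by (simp add: abs_mult)
  moreover have "\<bar>ak * block_kernel x z\<bar> \<le> ak"
    using ak_pos L_gt_1 by (simp add: block_kernel_def abs_mult power_le_one)
  moreover have "\<bar>mk * (if z = x then 1 else 0)\<bar> \<le> mk" using mk_nonneg by auto
  ultimately show ?thesis unfolding free_kernel_def by linarith
qed

lemma block_avg_eq_kernel_apply: "block_avg u x = kernel_apply block_kernel el u x"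
  for x :: "int^'d::finite"
proof -
  have "Blk L k (blkof L k x) = {z \<in> cube x el. blkof L k z = blkof L k x}"
    using same_block_mem_cube mem_Blk_iff by auto
  then have "block_avg u x
      = (\<Sum>z\<in>{z \<in> cube x el. blkof L k z = blkof L k x}. (1 / real L ^ k) ^ CARD('d) * u z)"
    by (simp add: block_avg_eq_sum)
  also have "\<dots> = kernel_apply block_kernel el u x" unfolding kernel_apply_def
    by (subst sum.inter_filter) (auto simp: block_kernel_def intro!: sum.cong)
  finally show ?thesis .
qed

lemma lap_eq: "lap L k g x = e2 * ((\<Sum>\<mu>\<in>UNIV. g (sh x \<mu> 1) + g (sh x \<mu> (-1))) - 2 * real CARD('d) * g x)"
  for x :: "int^'d::finite"
  unfolding lap_def by (simp add: sum.distrib sum_subtractf algebra_simps)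

lemma Afree_eq: "Afree L k a mubar0 u x
  = e2 * (2 * real CARD('d) * u x - (\<Sum>\<mu>\<in>UNIV. u (sh x \<mu> 1) + u (sh x \<mu> (-1)))) + mk * u x + ak * block_avg u x"
  for x :: "int^'d::finite"
  unfolding Afree_def lap_eq by (simp add: algebra_simps)

lemma adjacency_sum: "(\<Sum>z\<in>A. adjacency x z * g z)
  = (\<Sum>\<mu>\<in>UNIV. (if sh x \<mu> 1 \<in> A then g (sh x \<mu> 1) else 0) + (if sh x \<mu> (-1) \<in> A then g (sh x \<mu> (-1)) else 0))"
  if "finite A"
proof -
  have "(\<Sum>z\<in>A. adjacency x z * g z)
     = (\<Sum>z\<in>A. \<Sum>\<mu>\<in>UNIV. (if z = sh x \<mu> 1 then 1 else 0) * g z + (if z = sh x \<mu> (-1) then 1 else 0) * g z)"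
    unfolding adjacency_def by (intro sum.cong refl) (simp add: sum_distrib_left sum_distrib_right algebra_simps)
  also have "\<dots> = (\<Sum>\<mu>\<in>UNIV. \<Sum>z\<in>A. (if z = sh x \<mu> 1 then 1 else 0) * g z + (if z = sh x \<mu> (-1) then 1 else 0) * g z)"
    by (rule sum.swap)
  finally show ?thesis using that by (simp add: sum.distrib sum_indicator_mult)
qed

lemma Afree_eq_kernel_apply: "Afree L k a mubar0 u x = kernel_apply free_kernel el u x"
  for x :: "int^'d::finite"
proof -
  have x: "x \<in> cube x el" by (rule center_mem_cube) (use el_pos in simp)
  have "sh x \<mu> s \<in> cube x el" if "\<bar>s\<bar> = 1" for \<mu> s using that el_ge_1 by (intro sh_mem_cube) simp
  then have "(\<Sum>z\<in>cube x el. adjacency x z * u z) = (\<Sum>\<mu>\<in>UNIV. u (sh x \<mu> 1) + u (sh x \<mu> (-1)))"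
    by (simp add: adjacency_sum)
  moreover have "kernel_apply free_kernel el u x
      = e2 * (2 * real CARD('d) * (\<Sum>z\<in>cube x el. (if z = x then 1 else 0) * u z)
              - (\<Sum>z\<in>cube x el. adjacency x z * u z))
        + mk * (\<Sum>z\<in>cube x el. (if z = x then 1 else 0) * u z) + ak * kernel_apply block_kernel el u x"
    unfolding kernel_apply_def free_kernel_def
    by (simp add: algebra_simps sum.distrib sum_subtractf sum_distrib_left)
  ultimately show ?thesis unfolding Afree_eq block_avg_eq_kernel_apply by (simp add: sum_indicator_mult x)
qed

lemma block_kernel_sym: "block_kernel x z = block_kernel z x"
  by (auto simp: block_kernel_def)

lemma block_kernel_local: "z \<notin> cube x el \<Longrightarrow> block_kernel x z = 0"
  using same_block_mem_cube by (auto simp: block_kernel_def)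

definition dirichlet :: "(int^'d::finite \<Rightarrow> real) \<Rightarrow> real" where
  "dirichlet u = (\<Sum>\<mu>\<in>UNIV. fsum (\<lambda>x. (u (sh x \<mu> 1) - u x)\<^sup>2))"

lemma dirichlet_nonneg: "0 \<le> dirichlet u"
  unfolding dirichlet_def by (intro sum_nonneg fsum_nonneg) auto

lemma finite_supp_sh: "finite (supp u) \<Longrightarrow> finite (supp (\<lambda>x. u (sh x \<mu> s)))"
  by (rule finite_supp_compose_bij[OF bij_sh])

text \<open>Summation by parts on the lattice, one direction \<open>\<mu>\<close> at a time: the two cross terms
  \<open>u x u(x \<pm> e\<^sub>\<mu>)\<close> have the same sum after a shift.\<close>

lemma fsum_laplacian_form:
  fixes u :: "int^'d::finite \<Rightarrow> real" assumes fu: "finite (supp u)"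
  shows "fsum (\<lambda>x. u x * (2 * real CARD('d) * u x - (\<Sum>\<mu>\<in>UNIV. u (sh x \<mu> 1) + u (sh x \<mu> (-1)))))
    = dirichlet u"
proof -
  define f where "f \<mu> x = 2 * (u x)\<^sup>2 - u x * u (sh x \<mu> 1) - u x * u (sh x \<mu> (-1))" for \<mu> x
  have pointwise: "u x * (2 * real CARD('d) * u x - (\<Sum>\<mu>\<in>UNIV. u (sh x \<mu> 1) + u (sh x \<mu> (-1))))
      = (\<Sum>\<mu>\<in>UNIV. f \<mu> x)" for x
    unfolding f_def by (simp add: sum.distrib sum_subtractf sum_distrib_left power2_eq_square algebra_simps)
  have ff: "finite (supp (f \<mu>))" for \<mu>
    unfolding f_def using fu finite_supp_sh[OF fu] by (intro finite_supp_diff finite_supp_mult_right finite_supp_mult_left finite_supp_power2)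
  have each: "fsum (f \<mu>) = fsum (\<lambda>x. (u (sh x \<mu> 1) - u x)\<^sup>2)" for \<mu>
  proof -
    define A where "A x = (u x)\<^sup>2" for x
    define P where "P x = u x * u (sh x \<mu> 1)" for x
    define M where "M x = u x * u (sh x \<mu> (-1))" for x
    have fA: "finite (supp A)" and fP: "finite (supp P)" and fM: "finite (supp M)"
      unfolding A_def P_def M_def using fu by (auto intro: finite_supp_power2 finite_supp_mult_left)
    have fD: "finite (supp (\<lambda>x. A (sh x \<mu> 1)))" using finite_supp_sh[OF fA] .
    have "fsum M = fsum (\<lambda>y. M (sh y \<mu> 1))" by (rule fsum_reindex_bij[OF bij_sh, symmetric])
    also have "(\<lambda>y. M (sh y \<mu> 1)) = P" unfolding P_def M_def by (simp add: mult.commute)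
    finally have MP: "fsum M = fsum P" .
    have AA: "fsum (\<lambda>x. A (sh x \<mu> 1)) = fsum A" by (rule fsum_reindex_bij[OF bij_sh])
    have "fsum (f \<mu>) = fsum (\<lambda>x. 2 * A x - P x - M x)" unfolding f_def A_def P_def M_def by simp
    also have "\<dots> = 2 * fsum A - fsum P - fsum M"
      using fA fP fM by (simp add: fsum_diff fsum_cmult finite_supp_diff finite_supp_mult_right)
    also have "\<dots> = fsum (\<lambda>x. A (sh x \<mu> 1) - 2 * P x + A x)"
      using fA fP fD MP AA by (simp add: fsum_add fsum_diff fsum_cmult finite_supp_diff finite_supp_mult_right)
    also have "(\<lambda>x. A (sh x \<mu> 1) - 2 * P x + A x) = (\<lambda>x. (u (sh x \<mu> 1) - u x)\<^sup>2)"
      unfolding A_def P_def by (simp add: power2_diff algebra_simps)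
    finally show ?thesis .
  qed
  have "fsum (\<lambda>x. u x * (2 * real CARD('d) * u x - (\<Sum>\<mu>\<in>UNIV. u (sh x \<mu> 1) + u (sh x \<mu> (-1)))))
      = (\<Sum>\<mu>\<in>UNIV. fsum (f \<mu>))"
    unfolding pointwise using ff by (simp add: fsum_sum)
  then show ?thesis unfolding dirichlet_def each .
qed

lemma block_avg_idem: "block_avg (block_avg u) x = block_avg u x" for x :: "int^'d::finite"
proof -
  have "block_avg (block_avg u) x
      = (\<Sum>z\<in>Blk L k (blkof L k x). (1 / real L ^ k) ^ CARD('d) * Qk L k u (blkof L k z))"
    by (simp add: Qk_adj_def Qk_def)
  also have "\<dots> = (\<Sum>z\<in>Blk L k (blkof L k x). (1 / real L ^ k) ^ CARD('d) * Qk L k u (blkof L k x))"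
    by (rule sum.cong) (auto simp: mem_Blk_iff)
  also have "\<dots> = block_avg u x"
    using block_weight_card[of "blkof L k x"] by (simp add: Qk_adj_def mult.commute)
  finally show ?thesis .
qed

lemma fsum_block_avg_form:
  assumes fu: "finite (supp u)"
  shows "fsum (\<lambda>x. u x * block_avg u x) = fsum (\<lambda>x. (block_avg u x)\<^sup>2)"
proof -
  have fP: "finite (supp (block_avg u))"
    using fu unfolding block_avg_eq_kernel_apply by (rule finite_supp_kernel_apply)
  have "fsum (\<lambda>x. block_avg u x * block_avg u x) = fsum (\<lambda>x. block_avg (block_avg u) x * u x)"
    using fsum_kernel_apply_symmetric[OF block_kernel_sym block_kernel_local fP]
    unfolding block_avg_eq_kernel_apply .
  then show ?thesis unfolding block_avg_idem by (simp add: power2_eq_square mult.commute)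
qed

lemma fsum_Afree_form:
  fixes u :: "int^'d::finite \<Rightarrow> real" assumes fu: "finite (supp u)"
  shows "fsum (\<lambda>x. u x * Afree L k a mubar0 u x)
    = e2 * dirichlet u + mk * fsum (\<lambda>x. (u x)\<^sup>2) + ak * fsum (\<lambda>x. (block_avg u x)\<^sup>2)"
proof -
  define T where
    "T x = u x * (2 * real CARD('d) * u x - (\<Sum>\<mu>\<in>UNIV. u (sh x \<mu> 1) + u (sh x \<mu> (-1))))" for x
  have "(\<lambda>x. u x * Afree L k a mubar0 u x) = (\<lambda>x. e2 * T x + mk * (u x)\<^sup>2 + ak * (u x * block_avg u x))"
    unfolding Afree_eq T_def by (auto simp: algebra_simps power2_eq_square)
  moreover have "finite (supp T)" unfolding T_def using fu by (rule finite_supp_mult_left)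
  ultimately have "fsum (\<lambda>x. u x * Afree L k a mubar0 u x)
      = e2 * fsum T + mk * fsum (\<lambda>x. (u x)\<^sup>2) + ak * fsum (\<lambda>x. u x * block_avg u x)"
    using fu by (simp add: fsum_add fsum_cmult finite_supp_add finite_supp_mult_right
        finite_supp_power2 finite_supp_mult_left)
  then show ?thesis unfolding T_def fsum_laplacian_form[OF fu] fsum_block_avg_form[OF fu] .
qed

text \<open>Every monotone lattice path inside a block containing \<open>x\<close> uses only edges counted here.\<close>

definition local_energy :: "(int^'d::finite \<Rightarrow> real) \<Rightarrow> int^'d \<Rightarrow> real" where
  "local_energy u x = (\<Sum>y\<in>cube 0 el. \<Sum>\<mu>\<in>UNIV. (u (sh (x + y) \<mu> 1) - u (x + y))\<^sup>2)"

lemma local_energy_nonneg: "0 \<le> local_energy u x"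
  unfolding local_energy_def by (intro sum_nonneg) auto

lemma edge_difference_le:
  assumes "in_box x z q" "z \<in> cube x el"
  shows "\<bar>u (sh q \<mu> 1) - u q\<bar> \<le> sqrt (local_energy u x)"
proof -
  have "\<bar>q$j - x$j\<bar> \<le> \<bar>z$j - x$j\<bar>" for j using assms(1) unfolding in_box_def by (smt (verit))
  moreover have "\<bar>z$j - x$j\<bar> \<le> el" for j using assms(2) by (simp add: cube_def)
  ultimately have "\<bar>q$j - x$j\<bar> \<le> el" for j by (meson order_trans)
  then have q: "q - x \<in> cube 0 el" by (simp add: cube_def)
  have "(u (sh q \<mu> 1) - u q)\<^sup>2 \<le> (\<Sum>\<nu>\<in>UNIV. (u (sh q \<nu> 1) - u q)\<^sup>2)"
    by (rule member_le_sum) auto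
  also have "\<dots> \<le> local_energy u x" unfolding local_energy_def
    using member_le_sum[OF q, of "\<lambda>y. \<Sum>\<nu>\<in>UNIV. (u (sh (x + y) \<nu> 1) - u (x + y))\<^sup>2"]
    by (simp add: sum_nonneg)
  finally show ?thesis using real_sqrt_le_mono by fastforce
qed

text \<open>Walk from \<open>p\<close> to \<open>z\<close> one unit step at a time, staying in the box spanned by \<open>x\<close>
  and \<open>z\<close>; \<open>n\<close> is the remaining \<open>\<ell>\<^sup>1\<close> distance.\<close>

lemma path_difference_le:
  fixes u :: "int^'d::finite \<Rightarrow> real"
  assumes z: "z \<in> cube x el"
  shows "in_box x z p \<Longrightarrow> nat (\<Sum>i\<in>UNIV. \<bar>z$i - p$i\<bar>) = n
    \<Longrightarrow> \<bar>u p - u z\<bar> \<le> real n * sqrt (local_energy u x)"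
proof (induction n arbitrary: p)
  case 0
  have "0 \<le> (\<Sum>i\<in>UNIV. \<bar>z$i - p$i\<bar>)" by (intro sum_nonneg) auto
  with 0 have "(\<Sum>i\<in>UNIV. \<bar>z$i - p$i\<bar>) = 0" by simp
  then have "p = z" using sum_nonneg_eq_0_iff[of UNIV "\<lambda>i. \<bar>z$i - p$i\<bar>"] by (simp add: vec_eq_iff)
  then show ?case by simp
next
  case (Suc n)
  then obtain i where i: "z$i \<noteq> p$i"
    by (metis (mono_tags, lifting) abs_eq_0 diff_self nat_0 nat.distinct(1) sum.neutral)
  define s where "s = (if p$i < z$i then 1 else -1 :: int)"
  define p' where "p' = sh p i s"
  have p'_nth: "p'$j = (if j = i then p$j + s else p$j)" for j by (simp add: p'_def sh_nth)
  have in_box': "in_box x z p'"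
    using Suc.prems(1) i unfolding in_box_def p'_nth s_def by (smt (verit))
  have "\<bar>z$j - p'$j\<bar> = \<bar>z$j - p$j\<bar> - (if j = i then 1 else 0)" for j
    using i unfolding p'_nth s_def by auto
  then have "(\<Sum>j\<in>UNIV. \<bar>z$j - p'$j\<bar>) = (\<Sum>j\<in>UNIV. \<bar>z$j - p$j\<bar>) - 1"
    by (simp add: sum_subtractf)
  then have "nat (\<Sum>j\<in>UNIV. \<bar>z$j - p'$j\<bar>) = n" using Suc.prems(2) by simp
  then have IH: "\<bar>u p' - u z\<bar> \<le> real n * sqrt (local_energy u x)" by (rule Suc.IH[OF in_box'])
  have "\<bar>u p - u p'\<bar> \<le> sqrt (local_energy u x)"
  proof (cases "p$i < z$i")
    case True
    then show ?thesis
      using edge_difference_le[OF Suc.prems(1) z, of u i] by (simp add: p'_def s_def abs_minus_commute)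
  next
    case False
    then have "sh p' i 1 = p" by (simp add: p'_def s_def)
    then show ?thesis using edge_difference_le[OF in_box' z, of u i] by simp
  qed
  with IH show ?case by (simp add: algebra_simps)
qed

lemma same_block_difference_le:
  fixes u :: "int^'d::finite \<Rightarrow> real"
  assumes "blkof L k z = blkof L k x"
  shows "\<bar>u x - u z\<bar> \<le> real CARD('d) * el * sqrt (local_energy u x)"
proof -
  have z: "z \<in> cube x el" by (rule same_block_mem_cube[OF assms])
  define S where "S = (\<Sum>i\<in>UNIV. \<bar>z$i - x$i\<bar>)"
  have S0: "0 \<le> S" unfolding S_def by (intro sum_nonneg) auto
  have "S \<le> (\<Sum>i\<in>(UNIV::'d set). el)" unfolding S_def using z by (intro sum_mono) (simp add: cube_def)
  then have "real_of_int S \<le> real_of_int (int CARD('d) * el)" by (simp only: of_int_le_iff sum_constant)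
  then have S: "real (nat S) \<le> real CARD('d) * el" using S0 by simp
  have "in_box x z x" by (auto simp: in_box_def)
  then have "\<bar>u x - u z\<bar> \<le> real (nat S) * sqrt (local_energy u x)"
    using path_difference_le[OF z _ refl] by (simp only: S_def)
  also have "\<dots> \<le> real CARD('d) * el * sqrt (local_energy u x)"
    using S local_energy_nonneg by (intro mult_right_mono) auto
  finally show ?thesis .
qed

lemma block_avg_deviation_le:
  "\<bar>u x - block_avg u x\<bar> \<le> real CARD('d) * el * sqrt (local_energy u x)"
  for u :: "int^'d::finite \<Rightarrow> real"
proof -
  define w where "w = (1 / real L ^ k) ^ CARD('d)"
  define E where "E = real CARD('d) * el * sqrt (local_energy u x)"
  define Bl where "Bl = Blk L k (blkof L k x)"
  have w: "w * real (card Bl) = 1" unfolding w_def Bl_def by (rule block_weight_card)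
  have avg: "block_avg u x = (\<Sum>z\<in>Bl. w * u z)" by (simp add: block_avg_eq_sum Bl_def w_def)
  have "u x = (\<Sum>z\<in>Bl. w * u x)" using w by (simp add: mult_ac)
  then have "u x - block_avg u x = (\<Sum>z\<in>Bl. w * (u x - u z))"
    unfolding avg by (simp add: sum_subtractf right_diff_distrib)
  also have "\<bar>\<dots>\<bar> \<le> (\<Sum>z\<in>Bl. w * E)"
  proof (rule order_trans[OF sum_abs sum_mono])
    fix z assume "z \<in> Bl"
    then have "\<bar>u x - u z\<bar> \<le> E" unfolding E_def Bl_def by (intro same_block_difference_le) (simp add: mem_Blk_iff)
    then show "\<bar>w * (u x - u z)\<bar> \<le> w * E" by (simp add: abs_mult w_def mult_left_mono)
  qed
  also have "\<dots> = E" using w by (simp add: mult.commute)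
  finally show ?thesis unfolding E_def .
qed

lemma fsum_local_energy:
  fixes u :: "int^'d::finite \<Rightarrow> real" assumes fu: "finite (supp u)"
  shows "finite (supp (local_energy u))"
    and "fsum (local_energy u) = real (card (cube (0::int^'d) el)) * dirichlet u"
proof -
  define g where "g \<mu> x = (u (sh x \<mu> 1) - u x)\<^sup>2" for \<mu> x
  have "finite (supp (g \<mu>))" for \<mu>
    unfolding g_def using fu by (intro finite_supp_power2 finite_supp_diff finite_supp_sh)
  then have fg: "finite (supp (\<lambda>x. g \<mu> (x + y)))" for \<mu> y
    by (rule finite_supp_compose_bij[OF bij_plus_right])
  have E: "local_energy u = (\<lambda>x. \<Sum>y\<in>cube 0 el. \<Sum>\<mu>\<in>UNIV. g \<mu> (x + y))"
    unfolding local_energy_def g_def by simp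
  show "finite (supp (local_energy u))" unfolding E using fg by (intro finite_supp_sum) auto
  have "fsum (local_energy u) = (\<Sum>y\<in>cube (0::int^'d) el. \<Sum>\<mu>\<in>UNIV. fsum (\<lambda>x. g \<mu> (x + y)))"
    unfolding E using fg by (simp add: fsum_sum finite_supp_sum)
  also have "\<dots> = (\<Sum>y\<in>cube (0::int^'d) el. \<Sum>\<mu>\<in>UNIV. fsum (g \<mu>))"
    by (simp only: fsum_reindex_bij[OF bij_plus_right])
  also have "\<dots> = real (card (cube (0::int^'d) el)) * dirichlet u"
    by (simp add: dirichlet_def g_def[abs_def])
  finally show "fsum (local_energy u) = real (card (cube (0::int^'d) el)) * dirichlet u" .
qed

lemma poincare_block_avg:
  fixes u :: "int^'d::finite \<Rightarrow> real" assumes fu: "finite (supp u)"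
  shows "fsum (\<lambda>x. (u x)\<^sup>2)
    \<le> 2 * fsum (\<lambda>x. (block_avg u x)\<^sup>2)
       + 2 * (real CARD('d) * el)\<^sup>2 * real (card (cube (0::int^'d) el)) * dirichlet u"
proof -
  define C where "C = 2 * (real CARD('d) * el)\<^sup>2"
  have pointwise: "(u x)\<^sup>2 \<le> 2 * (block_avg u x)\<^sup>2 + C * local_energy u x" for x
  proof -
    have "(u x - block_avg u x)\<^sup>2 \<le> (real CARD('d) * el * sqrt (local_energy u x))\<^sup>2"
      using block_avg_deviation_le[of u x] by (metis abs_ge_zero power2_abs power_mono)
    then have "(u x - block_avg u x)\<^sup>2 \<le> (real CARD('d) * el)\<^sup>2 * local_energy u x"
      using local_energy_nonneg[of u x] by (simp add: power_mult_distrib)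
    moreover have "(u x)\<^sup>2 \<le> 2 * (block_avg u x)\<^sup>2 + 2 * (u x - block_avg u x)\<^sup>2"
      using zero_le_power2[of "u x - 2 * block_avg u x"] by (simp add: power2_eq_square algebra_simps)
    ultimately show ?thesis unfolding C_def by linarith
  qed
  have fP: "finite (supp (block_avg u))"
    using fu unfolding block_avg_eq_kernel_apply by (rule finite_supp_kernel_apply)
  have fE: "finite (supp (local_energy u))" by (rule fsum_local_energy(1)[OF fu])
  have "fsum (\<lambda>x. (u x)\<^sup>2) \<le> fsum (\<lambda>x. 2 * (block_avg u x)\<^sup>2 + C * local_energy u x)"
    using fu fP fE by (intro fsum_mono pointwise finite_supp_power2 finite_supp_add finite_supp_mult_right)
  also have "\<dots> = 2 * fsum (\<lambda>x. (block_avg u x)\<^sup>2) + C * fsum (local_energy u)"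
    using fP fE by (simp add: fsum_add fsum_cmult finite_supp_mult_right finite_supp_power2)
  finally show ?thesis unfolding fsum_local_energy(2)[OF fu] C_def by (simp add: mult_ac)
qed

lemma Afree_coercive:
  "\<exists>c>0. \<forall>u :: int^'d::finite \<Rightarrow> real. finite (supp u) \<longrightarrow>
     c * fsum (\<lambda>x. (u x)\<^sup>2) \<le> fsum (\<lambda>x. u x * Afree L k a mubar0 u x)"
proof -
  define P where "P = 2 * (real CARD('d) * el)\<^sup>2 * real (card (cube (0::int^'d) el))"
  have P: "0 < P" unfolding P_def using el_pos card_cube_pos[of el "0::int^'d"] by simp
  define c where "c = min (ak / 2) (e2 / P)"
  have "0 < c" unfolding c_def using ak_pos e2_pos P by simp
  moreover have "c \<le> ak / 2" unfolding c_def by (rule min.cobounded1)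
  moreover have "c \<le> e2 / P" unfolding c_def by (rule min.cobounded2)
  ultimately have c: "0 < c" "2 * c \<le> ak" "c * P \<le> e2" using P by (auto simp: pos_le_divide_eq)
  have "c * fsum (\<lambda>x. (u x)\<^sup>2) \<le> fsum (\<lambda>x. u x * Afree L k a mubar0 u x)"
    if fu: "finite (supp u)" for u :: "int^'d \<Rightarrow> real"
  proof -
    define U where "U = fsum (\<lambda>x. (u x)\<^sup>2)"
    define V where "V = fsum (\<lambda>x. (block_avg u x)\<^sup>2)"
    have nonneg: "0 \<le> U" "0 \<le> V" "0 \<le> dirichlet u"
      unfolding U_def V_def by (auto intro: fsum_nonneg dirichlet_nonneg)
    have "c * U \<le> c * (2 * V + P * dirichlet u)"
      using poincare_block_avg[OF fu] c unfolding U_def V_def P_def by (simp add: mult_ac)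
    also have "\<dots> = (2 * c) * V + (c * P) * dirichlet u" by (simp add: algebra_simps)
    also have "\<dots> \<le> ak * V + e2 * dirichlet u"
      using c nonneg by (intro add_mono mult_right_mono) auto
    also have "\<dots> \<le> fsum (\<lambda>x. u x * Afree L k a mubar0 u x)"
      unfolding fsum_Afree_form[OF fu] U_def V_def using mk_nonneg nonneg by (simp add: U_def)
    finally show ?thesis unfolding U_def .
  qed
  with c show ?thesis by blast
qed

lemma free_kernel_coercive_kernel: "\<exists>B c. coercive_kernel (free_kernel :: int^'d::finite \<Rightarrow> _) el B c"
proof -
  obtain c where "0 < c" and "\<forall>u :: int^'d \<Rightarrow> real. finite (supp u) \<longrightarrow>
      c * fsum (\<lambda>x. (u x)\<^sup>2) \<le> fsum (\<lambda>x. u x * Afree L k a mubar0 u x)"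
    using Afree_coercive by blast
  then have "coercive_kernel (free_kernel :: int^'d \<Rightarrow> _) el (e2 * (4 * real CARD('d)) + mk + ak) c"
    by unfold_locales
      (use el_pos free_kernel_sym free_kernel_local free_kernel_bounded in
        \<open>simp_all add: Afree_eq_kernel_apply[symmetric]\<close>)
  then show ?thesis by blast
qed

lemma l2_solution_iff_scaled_green:
  fixes w :: "int^'d::finite"
  assumes "coercive_kernel (free_kernel :: int^'d::finite \<Rightarrow> _) el B c"
  shows "(\<lambda>z. (g z)\<^sup>2) summable_on UNIV \<and> (\<forall>z. Afree L k a mubar0 g z = delta_pt L k TYPE('d) w z)
    \<longleftrightarrow> g = (\<lambda>x. (1 / eta L k) ^ CARD('d) * coercive_kernel.green free_kernel el B c w x)"
    (is "?P g \<longleftrightarrow> g = ?G")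
proof -
  interpret K: coercive_kernel "free_kernel :: int^'d \<Rightarrow> _" el B c by (rule assms)
  have green: "(\<lambda>z. (?G z)\<^sup>2) summable_on UNIV"
    using K.green_square_summable[of w] by (simp add: power_mult_distrib summable_on_cmult_right)
  have eq: "Afree L k a mubar0 ?G z = delta_pt L k TYPE('d) w z" for z
    by (simp add: Afree_eq_kernel_apply kernel_apply_cmult K.apply_green K.unit_at_def delta_pt_def)
  show ?thesis
  proof
    assume "?P g"
    then show "g = ?G"
      using green eq by (intro K.l2_solution_unique) (simp_all add: Afree_eq_kernel_apply[symmetric])
  qed (use green eq in simp)
qed

lemma Gfree_eq_scaled_green:
  fixes x w :: "int^'d::finite"
  assumes "coercive_kernel (free_kernel :: int^'d::finite \<Rightarrow> _) el B c"
  shows "Gfree L k a mubar0 x w = (1 / eta L k) ^ CARD('d) * coercive_kernel.green free_kernel el B c w x"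
  unfolding Gfree_def l2_solution_iff_scaled_green[OF assms] by simp

lemma l2_solution_iff_Gfree:
  "(\<lambda>z. (g z)\<^sup>2) summable_on UNIV \<and> (\<forall>z. Afree L k a mubar0 g z = delta_pt L k TYPE('d) w z)
    \<longleftrightarrow> g = (\<lambda>x. Gfree L k a mubar0 x w)"
  for w :: "int^'d::finite"
proof -
  obtain B c where K: "coercive_kernel (free_kernel :: int^'d \<Rightarrow> _) el B c"
    using free_kernel_coercive_kernel by blast
  show ?thesis unfolding l2_solution_iff_scaled_green[OF K] Gfree_eq_scaled_green[OF K] ..
qed

lemma Afree_Gfree: "Afree L k a mubar0 (\<lambda>x. Gfree L k a mubar0 x w) z = delta_pt L k TYPE('d) w z"
  for w :: "int^'d::finite"
  using l2_solution_iff_Gfree[of "\<lambda>x. Gfree L k a mubar0 x w" w] by simp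

lemma Gfree_square_summable: "(\<lambda>x. (Gfree L k a mubar0 x w)\<^sup>2) summable_on UNIV"
  for w :: "int^'d::finite"
  using l2_solution_iff_Gfree[of "\<lambda>x. Gfree L k a mubar0 x w" w] by simp

lemma Gfree_exp_decay:
  "\<exists>C \<rho>. 0 \<le> \<rho> \<and> \<rho> < 1 \<and>
     (\<forall>x w :: int^'d::finite. \<bar>Gfree L k a mubar0 x w\<bar> \<le> C * exp_decay \<rho> (x - w))"
proof -
  obtain B c where K: "coercive_kernel (free_kernel :: int^'d \<Rightarrow> _) el B c"
    using free_kernel_coercive_kernel by blast
  interpret K: coercive_kernel "free_kernel :: int^'d \<Rightarrow> _" el B c by (rule K)
  have "\<bar>Gfree L k a mubar0 x w\<bar>
      \<le> ((1 / eta L k) ^ CARD('d) * K.green_bound) * exp_decay K.decay_base (x - w)" for x w :: "int^'d"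
    unfolding Gfree_eq_scaled_green[OF K] using K.abs_green_le[of w x] L_gt_1
    by (simp add: abs_mult eta_def mult.assoc mult_left_mono)
  then show ?thesis using K.decay_base_nonneg K.decay_base_less_1 by blast
qed

text \<open>If \<open>el\<close> divides \<open>c + 1\<close>, the mirror \<open>x\<^sub>\<mu> \<mapsto> c - x\<^sub>\<mu>\<close> maps blocks onto blocks, so it
  commutes with the block average and hence with the operator.\<close>

lemma blkof_reflect:
  assumes "el dvd c + 1"
  shows "blkof L k (reflect c \<mu> z) = reflect ((c + 1) div el - 1) \<mu> (blkof L k z)"
  using int_div_reflect[OF el_pos assms] by (simp add: vec_eq_iff blkof_def reflect_def)

lemma block_avg_reflect:
  fixes g :: "int^'d::finite \<Rightarrow> real" assumes "el dvd c + 1"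
  shows "block_avg (\<lambda>z. g (reflect c \<mu> z)) x = block_avg g (reflect c \<mu> x)"
proof -
  have same: "blkof L k (reflect c \<mu> z) = blkof L k (reflect c \<mu> x) \<longleftrightarrow> blkof L k z = blkof L k x" for z
    unfolding blkof_reflect[OF assms] by (metis reflect_reflect)
  show ?thesis unfolding block_avg_eq_sum
    by (rule sum.reindex_bij_witness[of _ "reflect c \<mu>" "reflect c \<mu>"])
       (auto simp: mem_Blk_iff same[symmetric])
qed

lemma Afree_reflect:
  fixes g :: "int^'d::finite \<Rightarrow> real" assumes "el dvd c + 1"
  shows "Afree L k a mubar0 (\<lambda>z. g (reflect c \<mu> z)) x = Afree L k a mubar0 g (reflect c \<mu> x)"
proof -
  have "(\<Sum>\<nu>\<in>UNIV. g (reflect c \<mu> (sh x \<nu> 1)) + g (reflect c \<mu> (sh x \<nu> (-1))))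
      = (\<Sum>\<nu>\<in>UNIV. g (sh (reflect c \<mu> x) \<nu> 1) + g (sh (reflect c \<mu> x) \<nu> (-1)))"
    by (intro sum.cong) (auto simp: sh_reflect)
  then show ?thesis unfolding Afree_eq block_avg_reflect[OF assms] by simp
qed

lemma Gfree_reflect:
  fixes x w :: "int^'d::finite" assumes "el dvd c + 1"
  shows "Gfree L k a mubar0 (reflect c \<mu> x) w = Gfree L k a mubar0 x (reflect c \<mu> w)"
proof -
  have "(\<lambda>x. (Gfree L k a mubar0 (reflect c \<mu> x) w)\<^sup>2) summable_on UNIV"
    using summable_on_reindex_bij_betw[OF bij_betw_reflect,
        of "\<lambda>x. (Gfree L k a mubar0 x w)\<^sup>2"] Gfree_square_summable[of w] by simp
  moreover have "Afree L k a mubar0 (\<lambda>x. Gfree L k a mubar0 (reflect c \<mu> x) w) z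
      = delta_pt L k TYPE('d) (reflect c \<mu> w) z" for z
  proof -
    have "Afree L k a mubar0 (\<lambda>x. Gfree L k a mubar0 (reflect c \<mu> x) w) z
        = Afree L k a mubar0 (\<lambda>x. Gfree L k a mubar0 x w) (reflect c \<mu> z)"
      by (rule Afree_reflect[OF assms])
    also have "\<dots> = delta_pt L k TYPE('d) w (reflect c \<mu> z)" by (rule Afree_Gfree)
    also have "\<dots> = delta_pt L k TYPE('d) (reflect c \<mu> w) z"
      unfolding delta_pt_def by (metis reflect_reflect)
    finally show ?thesis .
  qed
  ultimately have "(\<lambda>x. Gfree L k a mubar0 (reflect c \<mu> x) w) = (\<lambda>x. Gfree L k a mubar0 x (reflect c \<mu> w))"
    using l2_solution_iff_Gfree[of "\<lambda>x. Gfree L k a mubar0 (reflect c \<mu> x) w" "reflect c \<mu> w"] by blast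
  then show ?thesis by (rule fun_cong)
qed

end

section \<open>Images and the Neumann problem\<close>

lemma Img_coord_cong:
  "w \<in> Img L m y \<Longrightarrow> \<forall>i. (2 * int L ^ m) dvd (w$i - y$i) \<or> (2 * int L ^ m) dvd (w$i + 1 + y$i)"
proof (induction rule: Img.induct)
  case (refl1 w \<mu>)
  show ?case
  proof
    fix i
    show "(2 * int L ^ m) dvd (Pref \<mu> w $ i - y$i) \<or> (2 * int L ^ m) dvd (Pref \<mu> w $ i + 1 + y$i)"
    proof (cases "i = \<mu>")
      case True
      then have "Pref \<mu> w $ i - y$i = - (w$i + 1 + y$i)" "Pref \<mu> w $ i + 1 + y$i = - (w$i - y$i)"
        by (auto simp: Pref_def)
      then show ?thesis using refl1.IH[rule_format, of i] by (simp only: dvd_minus_iff) blast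
    qed (use refl1.IH in \<open>simp add: Pref_def\<close>)
  qed
next
  case (refl2 w \<mu>)
  show ?case
  proof
    fix i
    show "(2 * int L ^ m) dvd (Pbar L m \<mu> w $ i - y$i) \<or> (2 * int L ^ m) dvd (Pbar L m \<mu> w $ i + 1 + y$i)"
    proof (cases "i = \<mu>")
      case True
      then have "Pbar L m \<mu> w $ i - y$i = 2 * int L ^ m - (w$i + 1 + y$i)"
        "Pbar L m \<mu> w $ i + 1 + y$i = 2 * int L ^ m - (w$i - y$i)"
        by (auto simp: Pbar_def)
      then show ?thesis using refl2.IH[rule_format, of i] by (metis dvd_diff dvd_refl)
    qed (use refl2.IH in \<open>simp add: Pbar_def\<close>)
  qed
qed simp

lemma Img_inOmega_eq:
  assumes "w \<in> Img L m y" "inOmega L m w" "inOmega L m y" shows "w = y"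
proof -
  have "w$i = y$i" for i
  proof -
    have b: "0 \<le> w$i" "w$i < int L ^ m" "0 \<le> y$i" "y$i < int L ^ m"
      using assms(2,3) by (auto simp: inOmega_def)
    have "\<not> (2 * int L ^ m) dvd (w$i + 1 + y$i)"
      using b by (intro zdvd_not_zless) auto
    then have "(2 * int L ^ m) dvd (w$i - y$i)" using Img_coord_cong[OF assms(1)] by blast
    then show ?thesis using b dvd_imp_le_int[of "w$i - y$i" "2 * int L ^ m"] by (cases "w$i = y$i") auto
  qed
  then show ?thesis by (simp add: vec_eq_iff)
qed

lemma reflect_image_Img:
  assumes "\<And>w. w \<in> Img L m y \<Longrightarrow> reflect c \<mu> w \<in> Img L m y"
  shows "reflect c \<mu> ` Img L m y = Img L m y"
proof
  show "Img L m y \<subseteq> reflect c \<mu> ` Img L m y"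
    using assms by (metis image_eqI reflect_reflect subsetI)
qed (use assms in auto)

lemma Pref_image_Img: "reflect (-1) \<mu> ` Img L m y = Img L m y"
  by (rule reflect_image_Img) (metis Img.refl1 Pref_eq_reflect)

lemma Pbar_image_Img: "reflect (2 * int L ^ m - 1) \<mu> ` Img L m y = Img L m y"
  by (rule reflect_image_Img) (metis Img.refl2 Pbar_eq_reflect)

lemma infsum_sum_swap:
  fixes f :: "'i \<Rightarrow> 'a \<Rightarrow> real"
  assumes "finite I" "\<And>i. i \<in> I \<Longrightarrow> f i summable_on A"
  shows "(\<lambda>b. \<Sum>i\<in>I. f i b) summable_on A \<and> infsum (\<lambda>b. \<Sum>i\<in>I. f i b) A = (\<Sum>i\<in>I. infsum (f i) A)"
  using assms
proof (induction I rule: finite_induct)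
  case (insert i I)
  then have "f i summable_on A" "(\<lambda>b. \<Sum>i\<in>I. f i b) summable_on A"
    "infsum (\<lambda>b. \<Sum>i\<in>I. f i b) A = (\<Sum>i\<in>I. infsum (f i) A)" by auto
  with insert.hyps show ?case by (simp add: summable_on_add infsum_add)
qed simp

lemma symmetric_system_null_solution:
  fixes M :: "'a \<Rightarrow> 'a \<Rightarrow> real"
  assumes S: "finite S" and sym: "\<And>x y. M x y = M y x"
    and solvable: "\<exists>g. \<forall>x\<in>S. (\<Sum>y\<in>S. M x y * g y) = (if x = p then 1 else 0)"
    and null: "\<And>x. x \<in> S \<Longrightarrow> (\<Sum>y\<in>S. M x y * h y) = 0"
    and p: "p \<in> S"
  shows "h p = 0"
proof -
  obtain g where g: "\<And>x. x \<in> S \<Longrightarrow> (\<Sum>y\<in>S. M x y * g y) = (if x = p then 1 else 0)"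
    using solvable by blast
  have "h p = (\<Sum>x\<in>S. h x * (\<Sum>y\<in>S. M x y * g y))"
    using S p by (simp add: g if_distrib[of "\<lambda>t. _ * t"] cong: if_cong)
  also have "\<dots> = (\<Sum>x\<in>S. \<Sum>y\<in>S. g y * (M y x * h x))"
    by (simp add: sum_distrib_left sym mult_ac)
  also have "\<dots> = (\<Sum>y\<in>S. g y * (\<Sum>x\<in>S. M y x * h x))"
    by (subst sum.swap) (simp add: sum_distrib_left)
  also have "\<dots> = 0" by (simp add: null)
  finally show ?thesis .
qed

locale box_operator = block_operator +
  fixes m :: nat
  assumes k_le_m: "k \<le> m"
begin

definition image_sum :: "int^'d::finite \<Rightarrow> int^'d \<Rightarrow> real" where
  "image_sum y x = (\<Sum>\<^sub>\<infinity>w\<in>Img L m y. Gfree L k a mubar0 x w)"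

lemma Gfree_abs_summable_Img: "(\<lambda>w. norm (Gfree L k a mubar0 x w)) summable_on Img L m y"
  for x :: "int^'d::finite"
proof -
  obtain C \<rho> where \<rho>: "0 \<le> \<rho>" "\<rho> < 1"
    and G: "\<And>x w :: int^'d. \<bar>Gfree L k a mubar0 x w\<bar> \<le> C * exp_decay \<rho> (x - w)"
    using Gfree_exp_decay by blast
  show ?thesis
  proof (rule summable_on_comparison_test)
    show "(\<lambda>w. C * exp_decay \<rho> (w - x)) summable_on Img L m y"
      using \<rho> by (intro summable_on_cmult_right exp_decay_shift_summable)
    show "norm (Gfree L k a mubar0 x w) \<le> C * exp_decay \<rho> (w - x)" for w
      using G[of x w] exp_decay_minus_commute[of \<rho> x w] by simp
  qed simp
qed

lemma Gfree_summable_Img: "(\<lambda>w. Gfree L k a mubar0 x w) summable_on Img L m y"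
  by (rule abs_summable_summable[OF Gfree_abs_summable_Img])

lemma image_sum_reflect:
  fixes x :: "int^'d::finite"
  assumes "el dvd c + 1" and image: "reflect c \<mu> ` Img L m y = Img L m y"
  shows "image_sum y (reflect c \<mu> x) = image_sum y x"
proof -
  have "image_sum y (reflect c \<mu> x) = (\<Sum>\<^sub>\<infinity>w\<in>Img L m y. Gfree L k a mubar0 x (reflect c \<mu> w))"
    unfolding image_sum_def by (intro infsum_cong Gfree_reflect[OF assms(1)])
  also have "\<dots> = (\<Sum>\<^sub>\<infinity>w\<in>reflect c \<mu> ` Img L m y. Gfree L k a mubar0 x w)"
    by (simp add: infsum_reindex[OF inj_on_reflect] o_def)
  finally show ?thesis unfolding image image_sum_def .
qed

lemma image_sum_Pref: "image_sum y (Pref \<mu> x) = image_sum y x"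
  unfolding Pref_eq_reflect by (rule image_sum_reflect[OF _ Pref_image_Img]) simp

lemma image_sum_Pbar: "image_sum y (Pbar L m \<mu> x) = image_sum y x"
proof -
  have "el dvd int L ^ m" using k_le_m by (simp add: le_imp_power_dvd)
  then show ?thesis unfolding Pbar_eq_reflect by (intro image_sum_reflect[OF _ Pbar_image_Img]) simp
qed

lemma Afree_image_sum:
  fixes y z :: "int^'d::finite" assumes "inOmega L m z" "inOmega L m y"
  shows "Afree L k a mubar0 (image_sum y) z = delta_pt L k TYPE('d) y z"
proof -
  have "Afree L k a mubar0 (image_sum y) z
      = (\<Sum>\<^sub>\<infinity>w\<in>Img L m y. \<Sum>x\<in>cube z el. free_kernel z x * Gfree L k a mubar0 x w)"
    unfolding Afree_eq_kernel_apply kernel_apply_def image_sum_def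
    using infsum_sum_swap[where I = "cube z el" and A = "Img L m y"
        and f = "\<lambda>x w. free_kernel z x * Gfree L k a mubar0 x w"]
    by (simp add: infsum_cmult_right' summable_on_cmult_right Gfree_summable_Img)
  also have "\<dots> = (\<Sum>\<^sub>\<infinity>w\<in>Img L m y. delta_pt L k TYPE('d) w z)"
    by (intro infsum_cong) (simp add: Afree_Gfree[unfolded Afree_eq_kernel_apply kernel_apply_def])
  also have "\<dots> = (\<Sum>\<^sub>\<infinity>w\<in>{y}. delta_pt L k TYPE('d) w z)"
    using Img_inOmega_eq[OF _ assms] Img.base[of y L m]
    by (intro infsum_cong_neutral) (auto simp: delta_pt_def)
  finally show ?thesis by simp
qed

abbreviation Omega :: "(int^'d::finite) set" where
  "Omega \<equiv> {z. inOmega L m z}"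

lemma finite_Omega: "finite (Omega :: (int^'d::finite) set)"
proof -
  have "Omega = {z::int^'d. \<forall>i. z$i \<in> {0..<int L ^ m}}" by (auto simp: inOmega_def)
  moreover have "finite {z::int^'d. \<forall>i. z$i \<in> {0..<int L ^ m}}" by (rule finite_vec_set) simp
  ultimately show ?thesis by simp
qed

definition restrict_Omega :: "(int^'d::finite \<Rightarrow> real) \<Rightarrow> int^'d \<Rightarrow> real" where
  "restrict_Omega g z = (if inOmega L m z then g z else 0)"

text \<open>A step out of \<open>\<Omega>\<close> lands on the mirror image of the starting point; this is why the
  Neumann Laplacian cannot tell a reflection-invariant function from the free one.\<close>

lemma sh_plus_outside_Omega:
  assumes "inOmega L m z" "\<not> inOmega L m (sh z \<mu> 1)" shows "sh z \<mu> 1 = Pbar L m \<mu> z"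
proof -
  have b: "0 \<le> z$i" "z$i < int L ^ m" for i using assms(1) by (auto simp: inOmega_def)
  obtain i where i: "\<not> (0 \<le> sh z \<mu> 1 $ i \<and> sh z \<mu> 1 $ i < int L ^ m)"
    using assms(2) by (auto simp: inOmega_def)
  then have "i = \<mu>" using b[of i] by (auto simp: sh_nth split: if_splits)
  then have "z$\<mu> = int L ^ m - 1" using i b[of \<mu>] by (auto simp: sh_nth)
  then show ?thesis by (auto simp: vec_eq_iff sh_nth Pbar_def)
qed

lemma sh_minus_outside_Omega:
  assumes "inOmega L m z" "\<not> inOmega L m (sh z \<mu> (-1))" shows "sh z \<mu> (-1) = Pref \<mu> z"
proof -
  have b: "0 \<le> z$i" "z$i < int L ^ m" for i using assms(1) by (auto simp: inOmega_def)
  obtain i where i: "\<not> (0 \<le> sh z \<mu> (-1) $ i \<and> sh z \<mu> (-1) $ i < int L ^ m)"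
    using assms(2) by (auto simp: inOmega_def)
  then have "i = \<mu>" using b[of i] by (auto simp: sh_nth split: if_splits)
  then have "z$\<mu> = 0" using i b[of \<mu>] by (auto simp: sh_nth)
  then show ?thesis by (auto simp: vec_eq_iff sh_nth Pref_def)
qed

lemma lapN_restrict_eq_lap:
  assumes z: "inOmega L m z"
    and Pref: "\<And>\<mu> x. g (Pref \<mu> x) = g x" and Pbar: "\<And>\<mu> x. g (Pbar L m \<mu> x) = g x"
  shows "lapN L m k (restrict_Omega g) z = lap L k g z"
proof -
  have "(if inOmega L m (sh z \<mu> s) then restrict_Omega g (sh z \<mu> s) else restrict_Omega g z) = g (sh z \<mu> s)"
    if "s = 1 \<or> s = -1" for \<mu> s
    using that z sh_plus_outside_Omega[OF z, of \<mu>] sh_minus_outside_Omega[OF z, of \<mu>] Pref Pbar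
    by (auto simp: restrict_Omega_def)
  then show ?thesis using z by (simp add: lapN_def lap_def restrict_Omega_def)
qed

lemma inOmegak_blkof: "inOmega L m z \<Longrightarrow> inOmegak L m k (blkof L k z)"
proof -
  assume z: "inOmega L m z"
  have L: "int L ^ m = el * int L ^ (m - k)" using k_le_m by (simp add: power_add[symmetric])
  have "0 \<le> z$i div el \<and> z$i div el < int L ^ (m - k)" for i
  proof
    have b: "0 \<le> z$i" "z$i < el * int L ^ (m - k)" using z L by (auto simp: inOmega_def)
    then show "0 \<le> z$i div el" using el_pos by (simp add: pos_imp_zdiv_nonneg_iff)
    have "el * (z$i div el) \<le> z$i" using int_div_eq_iff[OF el_pos, of "z$i" "z$i div el"] by simp
    with b have "el * (z$i div el) < el * int L ^ (m - k)" by linarith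
    then show "z$i div el < int L ^ (m - k)" using el_pos by simp
  qed
  then show ?thesis by (simp add: inOmegak_def blkof_def)
qed

lemma Blk_blkof_subset_Omega:
  assumes "inOmega L m z" "x \<in> Blk L k (blkof L k z)" shows "inOmega L m x"
proof -
  have "0 \<le> x$i \<and> x$i < int L ^ m" for i
  proof -
    define t where "t = z$i div el"
    have "0 \<le> t" "t < int L ^ (m - k)"
      using inOmegak_blkof[OF assms(1)] unfolding t_def inOmegak_def blkof_def by auto
    then have "0 \<le> t" "t + 1 \<le> int L ^ (m - k)" by auto
    then have "0 \<le> el * t" "el * (t + 1) \<le> el * int L ^ (m - k)"
      using el_pos by (auto intro: mult_left_mono)
    moreover have "el * int L ^ (m - k) = int L ^ m" using k_le_m by (simp add: power_add[symmetric])
    moreover have "el * t \<le> x$i" "x$i < el * t + el" using assms(2) by (auto simp: Blk_def blkof_def t_def)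
    ultimately show ?thesis by (simp add: algebra_simps)
  qed
  then show ?thesis by (simp add: inOmega_def)
qed

lemma QOmk_restrict_eq_block_avg:
  assumes "inOmega L m z"
  shows "QOmk_adj L k (QOmk L m k (restrict_Omega g)) z = block_avg g z"
  using assms inOmegak_blkof[OF assms] Blk_blkof_subset_Omega[OF assms]
  by (simp add: QOmk_adj_def QOmk_def Qk_adj_def Qk_def restrict_Omega_def cong: sum.cong)

lemma AOm_restrict_eq_Afree:
  assumes "inOmega L m z"
    and "\<And>\<mu> x. g (Pref \<mu> x) = g x" "\<And>\<mu> x. g (Pbar L m \<mu> x) = g x"
  shows "AOm L m k a mubar0 (restrict_Omega g) z = Afree L k a mubar0 g z"
  using assms unfolding AOm_def Afree_def
  by (simp add: lapN_restrict_eq_lap QOmk_restrict_eq_block_avg restrict_Omega_def)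

definition neumann_kernel :: "int^'d::finite \<Rightarrow> int^'d \<Rightarrow> real" where
  "neumann_kernel z z' = e2 * ((\<Sum>y\<in>Omega. adjacency z y) * (if z' = z then 1 else 0) - adjacency z z')
     + mk * (if z' = z then 1 else 0) + ak * block_kernel z z'"

lemma neumann_kernel_sym: "neumann_kernel z z' = neumann_kernel z' z"
  by (cases "z' = z") (auto simp: neumann_kernel_def adjacency_sym block_kernel_sym)

lemma AOm_eq_neumann_kernel:
  fixes z :: "int^'d::finite"
  assumes z: "inOmega L m z"
  shows "AOm L m k a mubar0 g z = (\<Sum>z'\<in>Omega. neumann_kernel z z' * g z')"
proof -
  let ?In = "\<lambda>\<mu> s. inOmega L m (sh z \<mu> s)"
  have "lapN L m k g z = e2 * (\<Sum>\<mu>\<in>UNIV.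
      ((if ?In \<mu> 1 then g (sh z \<mu> 1) else 0) + (if ?In \<mu> (-1) then g (sh z \<mu> (-1)) else 0))
      - ((if ?In \<mu> 1 then 1 else 0) + (if ?In \<mu> (-1) then 1 else 0)) * g z)"
    unfolding lapN_def by (intro arg_cong[where f = "\<lambda>t. _ * t"] sum.cong) auto
  also have "\<dots> = e2 * ((\<Sum>z'\<in>Omega. adjacency z z' * g z') - (\<Sum>z'\<in>Omega. adjacency z z') * g z)"
    using adjacency_sum[OF finite_Omega, of z g] adjacency_sum[OF finite_Omega, of z "\<lambda>_. 1"]
    by (simp add: sum_subtractf sum_distrib_right)
  finally have lapN: "lapN L m k g z
      = e2 * ((\<Sum>z'\<in>Omega. adjacency z z' * g z') - (\<Sum>z'\<in>Omega. adjacency z z') * g z)" .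
  have "QOmk_adj L k (QOmk L m k g) z
      = (\<Sum>x\<in>Blk L k (blkof L k z). (1 / real L ^ k) ^ CARD('d) * g x)"
    using inOmegak_blkof[OF z] by (simp add: QOmk_adj_def QOmk_def)
  also have "Blk L k (blkof L k z) = {z' \<in> Omega. blkof L k z' = blkof L k z}"
    using Blk_blkof_subset_Omega[OF z] mem_Blk_iff by auto
  also have "(\<Sum>x\<in>\<dots>. (1 / real L ^ k) ^ CARD('d) * g x) = (\<Sum>z'\<in>Omega. block_kernel z z' * g z')"
    by (subst sum.inter_filter[OF finite_Omega]) (auto simp: block_kernel_def intro!: sum.cong)
  finally have Q: "QOmk_adj L k (QOmk L m k g) z = (\<Sum>z'\<in>Omega. block_kernel z z' * g z')" .
  define deg where "deg = (\<Sum>y\<in>Omega. adjacency z y)"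
  have "(\<Sum>z'\<in>Omega. neumann_kernel z z' * g z')
      = e2 * (deg * (\<Sum>z'\<in>Omega. (if z' = z then 1 else 0) * g z') - (\<Sum>z'\<in>Omega. adjacency z z' * g z'))
        + mk * (\<Sum>z'\<in>Omega. (if z' = z then 1 else 0) * g z') + ak * (\<Sum>z'\<in>Omega. block_kernel z z' * g z')"
    unfolding neumann_kernel_def deg_def[symmetric]
    by (simp add: algebra_simps sum.distrib sum_subtractf sum_distrib_left)
  also have "\<dots> = AOm L m k a mubar0 g z"
    unfolding AOm_def lapN Q deg_def[symmetric] sum_indicator_mult[OF finite_Omega] using z
    by (simp add: algebra_simps)
  finally show ?thesis ..
qed

lemma GOm_eq_image_sum:
  fixes x y :: "int^'d::finite" assumes x: "inOmega L m x" and y: "inOmega L m y"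
  shows "GOm L m k a mubar0 x y = image_sum y x"
proof -
  define e :: real where "e = (1 / eta L k) ^ CARD('d)"
  have e: "e \<noteq> 0" unfolding e_def eta_def using L_gt_1 by simp
  have solves: "AOm L m k a mubar0 (restrict_Omega (image_sum p)) z = delta_pt L k TYPE('d) p z"
    if "inOmega L m p" "inOmega L m z" for p z :: "int^'d"
    using that by (simp add: AOm_restrict_eq_Afree image_sum_Pref image_sum_Pbar Afree_image_sum)
  have unique: "g = restrict_Omega (image_sum y)"
    if g0: "\<forall>z. \<not> inOmega L m z \<longrightarrow> g z = 0"
      and g: "\<forall>z. inOmega L m z \<longrightarrow> AOm L m k a mubar0 g z = delta_pt L k TYPE('d) y z" for g
  proof
    fix p
    define h where "h z = g z - restrict_Omega (image_sum y) z" for z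
    have "h p = 0" if p: "inOmega L m p"
    proof (rule symmetric_system_null_solution[OF finite_Omega neumann_kernel_sym])
      show "\<exists>f. \<forall>z\<in>Omega. (\<Sum>z'\<in>Omega. neumann_kernel z z' * f z') = (if z = p then 1 else 0)"
        using solves[OF p] e
        by (intro exI[of _ "\<lambda>z'. restrict_Omega (image_sum p) z' / e"])
           (auto simp: AOm_eq_neumann_kernel[symmetric] sum_divide_distrib[symmetric] delta_pt_def e_def)
      show "(\<Sum>z'\<in>Omega. neumann_kernel z z' * h z') = 0" if "z \<in> Omega" for z
        using that g solves[OF y, of z]
        by (simp add: h_def AOm_eq_neumann_kernel[symmetric] right_diff_distrib sum_subtractf)
    qed (use p in simp)
    then show "g p = restrict_Omega (image_sum y) p"
      using g0 by (cases "inOmega L m p") (auto simp: h_def restrict_Omega_def)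
  qed
  have "(THE g. (\<forall>z. \<not> inOmega L m z \<longrightarrow> g z = 0)
      \<and> (\<forall>z. inOmega L m z \<longrightarrow> AOm L m k a mubar0 g z = delta_pt L k TYPE('d) y z))
      = restrict_Omega (image_sum y)"
    using solves[OF y] unique by (intro the_equality) (auto simp: restrict_Omega_def)
  then show ?thesis using x by (simp add: GOm_def restrict_Omega_def)
qed

end

theorem mainTheorem17:
  fixes L m k :: nat and a mubar0 :: real and x y :: "int^'d::finite"
  assumes "odd L" and "L > 1" and "k \<ge> 1" and "m \<ge> k"
    and "0 < a" and "a \<le> 1" and "mubar0 \<ge> 0"
    and "inOmega L m x" and "inOmega L m y"
  shows "(\<lambda>w. norm (Gfree L k a mubar0 x w)) summable_on Img L m y \<and>
         GOm L m k a mubar0 x y = (\<Sum>\<^sub>\<infinity>w\<in>Img L m y. Gfree L k a mubar0 x w)"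
proof -
  interpret box_operator L k a mubar0 m
    using assms by unfold_locales auto
  show ?thesis
    using Gfree_abs_summable_Img GOm_eq_image_sum[OF assms(8,9)] by (simp add: image_sum_def)
qed

end
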